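(* Let $D$ be a domain, $R=D[X_1,\dots,X_n]$ with $n\ge2$, and suppose that $\mathcal I(R)$ is a BF-monoid. Then the following ideals are atoms of $\mathcal I(R)$: \begin{enumerate} \item $\mathfrak b_i(X_1,X_2)$ for every $i\in\mathbb N$; \item $\mathfrak c_{2i+1}(X_1,X_2)$ for every $i\in\mathbb N$; \item $\mathfrak c_{2i}(X_1,X_2)$ for every $i\in\mathbb N_{\ge3}$; \item $\mathfrak c'(X_1,X_2)=\langle X_1^3+X_2^3,\,X_1^2X_2,\,X_1X_2^2\rangle$. \end{enumerate}
   Context: $\mathcal I(R)$ is the semigroup of nonzero ideals of $R$ under multiplication; an atom is a non-unit (i.e., an ideal $\ne R$) $\mathfrak a$ such that $\mathfrak a=IJ$ with $I,J\in\mathcal I(R)$ implies $I=R$ or $J=R$. BF-monoid: unit-cancellative and every element has finitely many (and at least one) lengths of factorizations into atoms. Ideals: $\mathfrak b_i(X_1,X_2)=\langle X_1^i,X_2^i\rangle$; $\mathfrak c_{2i+1}(X_1,X_2)$ is generated by the monomials $X_1^{2i+1-t}X_2^t$ with $t\in\{0,1,3,5,\dots,2i+1\}$; $\mathfrak c_{2i}(X_1,X_2)$ is generated by the monomials $X_1^{2i-t}X_2^t$ with $t\in\{0,1,2,4,6,\dots,2i\}$. *)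

theory Defs
  imports Main "HOL-Library.Poly_Mapping" "HOL-Library.Cardinality"
begin

text \<open>Polynomial ring D[X_v : v in 'v] over a commutative ring, realised as finitely
supported functions from monomials ('v =>0 nat) to coefficients.\<close>
type_synonym ('v,'a) mpoly = "('v \<Rightarrow>\<^sub>0 nat) \<Rightarrow>\<^sub>0 'a"

definition Var :: "'v \<Rightarrow> ('v,'a::comm_ring_1) mpoly" where
  "Var v = Poly_Mapping.single (Poly_Mapping.single v 1) 1"

definition is_ideal :: "'r::comm_ring_1 set \<Rightarrow> bool" where
  "is_ideal I \<longleftrightarrow> 0 \<in> I \<and> (\<forall>a\<in>I. \<forall>b\<in>I. a + b \<in> I) \<and> (\<forall>r. \<forall>a\<in>I. r * a \<in> I)"

definition ideal_gen :: "'r::comm_ring_1 set \<Rightarrow> 'r set" where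
  "ideal_gen S = \<Inter>{I. is_ideal I \<and> S \<subseteq> I}"

definition ideal_mult :: "'r::comm_ring_1 set \<Rightarrow> 'r set \<Rightarrow> 'r set" where
  "ideal_mult I J = ideal_gen {a * b | a b. a \<in> I \<and> b \<in> J}"

text \<open>Elements of the monoid I(R): nonzero ideals.\<close>
definition nz_ideal :: "'r::comm_ring_1 set \<Rightarrow> bool" where
  "nz_ideal I \<longleftrightarrow> is_ideal I \<and> I \<noteq> {0}"

definition ideal_unit :: "'r::comm_ring_1 set \<Rightarrow> bool" where
  "ideal_unit U \<longleftrightarrow> nz_ideal U \<and> (\<exists>J. nz_ideal J \<and> ideal_mult U J = UNIV)"

definition ideal_atom :: "'r::comm_ring_1 set \<Rightarrow> bool" where
  "ideal_atom A \<longleftrightarrow> nz_ideal A \<and> A \<noteq> UNIV \<and>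
     (\<forall>I J. nz_ideal I \<longrightarrow> nz_ideal J \<longrightarrow> A = ideal_mult I J \<longrightarrow> I = UNIV \<or> J = UNIV)"

definition ideal_unit_cancellative :: "'r::comm_ring_1 itself \<Rightarrow> bool" where
  "ideal_unit_cancellative _ \<longleftrightarrow>
     (\<forall>A U :: 'r set. nz_ideal A \<longrightarrow> nz_ideal U \<longrightarrow>
        (ideal_mult A U = A \<or> ideal_mult U A = A) \<longrightarrow> ideal_unit U)"

text \<open>Set of lengths L(A): lengths of factorizations of A into atoms
  (the empty product being R).\<close>
definition ideal_lengths :: "'r::comm_ring_1 set \<Rightarrow> nat set" where
  "ideal_lengths A = {length xs | xs. (\<forall>x\<in>set xs. ideal_atom x) \<and> A = foldr ideal_mult xs UNIV}"

definition ideal_BF :: "'r::comm_ring_1 itself \<Rightarrow> bool" where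
  "ideal_BF T \<longleftrightarrow> ideal_unit_cancellative T \<and>
     (\<forall>A :: 'r set. nz_ideal A \<longrightarrow> ideal_lengths A \<noteq> {} \<and> finite (ideal_lengths A))"

definition b_ideal :: "nat \<Rightarrow> 'v \<Rightarrow> 'v \<Rightarrow> ('v,'a::comm_ring_1) mpoly set" where
  "b_ideal i x1 x2 = ideal_gen {Var x1 ^ i, Var x2 ^ i}"

definition c_odd_ideal :: "nat \<Rightarrow> 'v \<Rightarrow> 'v \<Rightarrow> ('v,'a::comm_ring_1) mpoly set" where
  "c_odd_ideal i x1 x2 = ideal_gen {Var x1 ^ (2*i+1-t) * Var x2 ^ t | t.
      t \<in> {0, 1} \<union> {t. odd t \<and> t \<le> 2*i+1}}"

definition c_even_ideal :: "nat \<Rightarrow> 'v \<Rightarrow> 'v \<Rightarrow> ('v,'a::comm_ring_1) mpoly set" where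
  "c_even_ideal i x1 x2 = ideal_gen {Var x1 ^ (2*i-t) * Var x2 ^ t | t.
      t \<in> {0, 1} \<union> {t. even t \<and> t \<le> 2*i}}"

definition c'_ideal :: "'v \<Rightarrow> 'v \<Rightarrow> ('v,'a::comm_ring_1) mpoly set" where
  "c'_ideal x1 x2 = ideal_gen {Var x1 ^ 3 + Var x2 ^ 3, Var x1 ^ 2 * Var x2, Var x1 * Var x2 ^ 2}"

end

theory Submission
  imports Defs
begin

text \<open>
  Grade \<open>R = D[X]\<close> by the total degree in \<open>x1, x2\<close> over the coefficient ring
  \<open>D' = D[X\<^sub>v : v \<noteq> x1, x2]\<close>. Each ideal in question is generated by forms of some degree \<open>d\<close>,
  contains powers of \<open>x1\<close> and \<open>x2\<close>, and has a generator with \<open>x2\<close>-free part \<open>x1\<^sup>d\<close>. If it is a product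
  \<open>I J\<close> of proper ideals, the orders \<open>p, q\<close> of \<open>I, J\<close> satisfy \<open>p + q = d\<close> and \<open>p, q \<ge> 1\<close> (a factor of
  order 0 would contain a unit), and every generator is a sum of products of degree-\<open>p\<close> initial forms
  of \<open>I\<close> with degree-\<open>q\<close> initial forms of \<open>J\<close>. These products inherit every \<open>D'\<close>-linear condition
  satisfied by the generators, such as the set of exponents of \<open>x2\<close> that may occur. Comparing the
  lowest \<open>x2\<close>-exponents of the initial forms then gives a contradiction: by parity for \<open>b\<^sub>i\<close> and
  \<open>c\<^sub>2\<^sub>i\<^sub>+\<^sub>1\<close>; for \<open>c\<^sub>2\<^sub>i\<close> either by a rank count over \<open>D'\<close> (five generators of distinct \<open>x2\<close>-orders
  against four products) or by a polarization identity; for \<open>c'\<close> through the relation between the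
  \<open>x2\<close>-free and the \<open>x2\<^sup>3\<close>-parts.
\<close>
abbreviation lookup where "lookup \<equiv> Poly_Mapping.lookup"
abbreviation keys where "keys \<equiv> Poly_Mapping.keys"
abbreviation single where "single \<equiv> Poly_Mapping.single"

section \<open>Homogeneous parts with respect to an additive weight\<close>

definition part :: "('k \<Rightarrow> bool) \<Rightarrow> ('k \<Rightarrow>\<^sub>0 'a::zero) \<Rightarrow> ('k \<Rightarrow>\<^sub>0 'a)" where
  "part P f = Abs_poly_mapping (\<lambda>m. if P m then lookup f m else 0)"

lemma lookup_part: "lookup (part P f) m = (if P m then lookup f m else 0)"
proof -
  have "finite {m. (if P m then lookup f m else 0) \<noteq> 0}"
    by (rule finite_subset[of _ "{m. lookup f m \<noteq> 0}"]) auto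
  then show ?thesis unfolding part_def by simp
qed

lemma keys_part: "keys (part P f) = {m \<in> keys f. P m}"
  by (auto simp: in_keys_iff lookup_part split: if_splits)

lemma part_add: "part P (f + g) = part P f + part P (g::'k \<Rightarrow>\<^sub>0 'a::monoid_add)"
  by (rule poly_mapping_eqI) (simp add: lookup_part lookup_add)

lemma part_diff: "part P (f - g) = part P f - part P (g::'k \<Rightarrow>\<^sub>0 'a::ab_group_add)"
  by (rule poly_mapping_eqI) (simp add: lookup_part lookup_minus)

lemma part_zero [simp]: "part P 0 = 0"
  by (rule poly_mapping_eqI) (simp add: lookup_part)

lemma part_eq_self: "(\<And>m. m \<in> keys f \<Longrightarrow> P m) \<Longrightarrow> part P f = f"
  by (rule poly_mapping_eqI) (auto simp: lookup_part in_keys_iff)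

lemma part_eq_0: "(\<And>m. m \<in> keys f \<Longrightarrow> \<not> P m) \<Longrightarrow> part P f = 0"
  by (rule poly_mapping_eqI) (auto simp: lookup_part in_keys_iff)

lemma part_neq_0: "m \<in> keys f \<Longrightarrow> P m \<Longrightarrow> part P f \<noteq> 0"
  using keys_part[of P f] by fastforce

lemma part_add_part_not: "part P f + part (\<lambda>m. \<not> P m) f = (f::'k \<Rightarrow>\<^sub>0 'a::monoid_add)"
  by (rule poly_mapping_eqI) (simp add: lookup_part lookup_add)

lemma part_add_eq_left:
  assumes "\<And>m. m \<in> keys F \<Longrightarrow> P m" "\<And>m. m \<in> keys G \<Longrightarrow> \<not> P m"
  shows "part P (F + G) = (F :: 'k \<Rightarrow>\<^sub>0 'a::monoid_add)"
  using assms by (simp add: part_add part_eq_self part_eq_0)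

lemma in_keys_addD: "m \<in> keys (f + g) \<Longrightarrow> m \<in> keys f \<or> m \<in> keys g"
  using keys_add[of f g] by blast

lemma in_keys_diffD: "m \<in> keys (f - g) \<Longrightarrow> m \<in> keys f \<or> m \<in> keys (g::'k \<Rightarrow>\<^sub>0 'b::ab_group_add)"
  using keys_diff[of f g] by blast

definition additive_weight :: "('k::monoid_add \<Rightarrow> nat) \<Rightarrow> bool" where
  "additive_weight w \<longleftrightarrow> (\<forall>a b. w (a + b) = w a + w b)"

lemma additive_weight_lookup: "additive_weight (\<lambda>m::'v \<Rightarrow>\<^sub>0 nat. lookup m v)"
  unfolding additive_weight_def by (simp add: lookup_add)

lemma in_keys_mult_weightE:
  assumes "additive_weight w" "m \<in> keys (f * g)"
  obtains a b where "a \<in> keys f" "b \<in> keys g" "w m = w a + w b"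
  using keys_mult[of f g] assms unfolding additive_weight_def by blast

lemma weight_in_keys_mult_eq:
  assumes "additive_weight w" "m \<in> keys (f * g)"
    and "\<And>x. x \<in> keys f \<Longrightarrow> w x = a" "\<And>y. y \<in> keys g \<Longrightarrow> w y = b"
  shows "w m = a + b"
  using assms by (metis in_keys_mult_weightE)

lemma weight_in_keys_mult_ge:
  assumes "additive_weight w" "m \<in> keys (f * g)"
    and "\<And>x. x \<in> keys f \<Longrightarrow> a \<le> w x" "\<And>y. y \<in> keys g \<Longrightarrow> b \<le> w y"
  shows "a + b \<le> w m"
  using assms by (metis add_mono in_keys_mult_weightE)

lemma weight_in_keys_mult_le:
  assumes "additive_weight w" "m \<in> keys (f * g)"
    and "\<And>x. x \<in> keys f \<Longrightarrow> w x \<le> a" "\<And>y. y \<in> keys g \<Longrightarrow> w y \<le> b"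
  shows "w m \<le> a + b"
  using assms by (metis add_mono in_keys_mult_weightE)

lemma part_mult_lowest:
  fixes f g :: "'k::comm_monoid_add \<Rightarrow>\<^sub>0 'a::comm_ring_1"
  assumes w: "additive_weight w"
    and f: "\<And>m. m \<in> keys f \<Longrightarrow> a \<le> w m" and g: "\<And>m. m \<in> keys g \<Longrightarrow> b \<le> w m"
  shows "part (\<lambda>m. w m = a + b) (f * g) = part (\<lambda>m. w m = a) f * part (\<lambda>m. w m = b) g"
proof -
  define F0 where "F0 = part (\<lambda>m. w m = a) f"
  define F1 where "F1 = part (\<lambda>m. w m \<noteq> a) f"
  define G0 where "G0 = part (\<lambda>m. w m = b) g"
  define G1 where "G1 = part (\<lambda>m. w m \<noteq> b) g"
  have F1_ge: "a + 1 \<le> w m" if "m \<in> keys F1" for m using that f by (force simp: F1_def keys_part)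
  have G1_ge: "b + 1 \<le> w m" if "m \<in> keys G1" for m using that g by (force simp: G1_def keys_part)
  have fs: "f = F0 + F1" unfolding F0_def F1_def by (rule part_add_part_not[symmetric])
  have gs: "g = G0 + G1" unfolding G0_def G1_def by (rule part_add_part_not[symmetric])
  have fg: "f * g = F0 * G0 + (F0 * G1 + F1 * g)"
    by (simp add: fs gs algebra_simps)
  have low: "w m = a + b" if m: "m \<in> keys (F0 * G0)" for m
  proof -
    obtain x y where "x \<in> keys F0" "y \<in> keys G0" "w m = w x + w y"
      by (rule in_keys_mult_weightE[OF w m])
    then show ?thesis by (simp add: F0_def G0_def keys_part)
  qed
  have high: "w m \<noteq> a + b" if "m \<in> keys (F0 * G1 + F1 * g)" for m
    using in_keys_addD[OF that]
  proof
    assume "m \<in> keys (F0 * G1)"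
    then obtain x y where "x \<in> keys F0" "y \<in> keys G1" "w m = w x + w y"
      by (rule in_keys_mult_weightE[OF w])
    then show ?thesis using G1_ge[of y] by (simp add: F0_def keys_part)
  next
    assume "m \<in> keys (F1 * g)"
    then obtain x y where "x \<in> keys F1" "y \<in> keys g" "w m = w x + w y"
      by (rule in_keys_mult_weightE[OF w])
    then show ?thesis using F1_ge[of x] g[of y] by simp
  qed
  show ?thesis unfolding fg F0_def[symmetric] G0_def[symmetric] by (rule part_add_eq_left[OF low high])
qed

lemma part_mult_homogeneous:
  fixes s f :: "'k::comm_monoid_add \<Rightarrow>\<^sub>0 'a::comm_ring_1"
  assumes w: "additive_weight w" and s: "\<And>m. m \<in> keys s \<Longrightarrow> w m = c"
  shows "part (\<lambda>m. w m = c + k) (s * f) = s * part (\<lambda>m. w m = k) f"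
proof -
  define F0 F1 where "F0 = part (\<lambda>m. w m = k) f" and "F1 = part (\<lambda>m. w m \<noteq> k) f"
  have "f = F0 + F1" unfolding F0_def F1_def by (simp only: part_add_part_not)
  then have sf: "s * f = s * F0 + s * F1" by (simp add: distrib_left)
  have low: "w m = c + k" if "m \<in> keys (s * F0)" for m
    using weight_in_keys_mult_eq[OF w that s, of k] by (auto simp: F0_def keys_part)
  have high: "w m \<noteq> c + k" if "m \<in> keys (s * F1)" for m
    by (rule in_keys_mult_weightE[OF w that]) (use s in \<open>auto simp: F1_def keys_part\<close>)
  show ?thesis unfolding sf F0_def[symmetric] by (rule part_add_eq_left[OF low high])
qed

lemma part_mult_lowest_Suc:
  fixes f g :: "'k::comm_monoid_add \<Rightarrow>\<^sub>0 'a::comm_ring_1"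
  assumes w: "additive_weight w"
    and f: "\<And>m. m \<in> keys f \<Longrightarrow> a \<le> w m" and g: "\<And>m. m \<in> keys g \<Longrightarrow> b \<le> w m"
  shows "part (\<lambda>m. w m = a + b + 1) (f * g) =
     part (\<lambda>m. w m = a) f * part (\<lambda>m. w m = b + 1) g + part (\<lambda>m. w m = a + 1) f * part (\<lambda>m. w m = b) g"
proof -
  define F0 F1 G0 G1 where "F0 = part (\<lambda>m. w m = a) f" and "F1 = part (\<lambda>m. w m \<noteq> a) f"
    and "G0 = part (\<lambda>m. w m = b) g" and "G1 = part (\<lambda>m. w m \<noteq> b) g"
  have F1: "a + 1 \<le> w m" if "m \<in> keys F1" for m using that f by (force simp: F1_def keys_part)
  have G1: "b + 1 \<le> w m" if "m \<in> keys G1" for m using that g by (force simp: G1_def keys_part)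
  have F0: "w m = a" if "m \<in> keys F0" for m using that by (simp add: F0_def keys_part)
  have G0: "w m = b" if "m \<in> keys G0" for m using that by (simp add: G0_def keys_part)
  have fs: "f = F0 + F1" and gs: "g = G0 + G1"
    unfolding F0_def F1_def G0_def G1_def by (simp_all only: part_add_part_not)
  have fg: "f * g = F0 * G0 + F0 * G1 + F1 * G0 + F1 * G1"
    unfolding fs gs by (simp only: distrib_left distrib_right ac_simps)
  let ?P = "\<lambda>m. w m = a + b + 1"
  have "part ?P (F0 * G0) = 0"
    by (rule part_eq_0) (use weight_in_keys_mult_eq[OF w _ F0 G0] in fastforce)
  moreover have "part ?P (F0 * G1) = part (\<lambda>m. w m = a) f * part (\<lambda>m. w m = b + 1) g"
  proof -
    have "part ?P (F0 * G1) = part (\<lambda>m. w m = a) F0 * part (\<lambda>m. w m = b + 1) G1"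
      using part_mult_lowest[OF w, of F0 a G1 "b + 1"] F0 G1 by (simp add: add.assoc)
    also have "\<dots> = part (\<lambda>m. w m = a) f * part (\<lambda>m. w m = b + 1) g"
      unfolding F0_def G1_def by (rule arg_cong2[where f = "(*)"]; rule poly_mapping_eqI; simp add: lookup_part)
    finally show ?thesis .
  qed
  moreover have "part ?P (F1 * G0) = part (\<lambda>m. w m = a + 1) f * part (\<lambda>m. w m = b) g"
  proof -
    have "part ?P (F1 * G0) = part (\<lambda>m. w m = a + 1) F1 * part (\<lambda>m. w m = b) G0"
      using part_mult_lowest[OF w, of F1 "a + 1" G0 b] F1 G0 by (simp add: ac_simps)
    also have "\<dots> = part (\<lambda>m. w m = a + 1) f * part (\<lambda>m. w m = b) g"
      unfolding F1_def G0_def by (rule arg_cong2[where f = "(*)"]; rule poly_mapping_eqI; simp add: lookup_part)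
    finally show ?thesis .
  qed
  moreover have "part ?P (F1 * G1) = 0"
    by (rule part_eq_0) (use weight_in_keys_mult_ge[OF w _ F1 G1] in fastforce)
  ultimately show ?thesis unfolding fg part_add by (simp only: add_0_left add_0_right)
qed

definition low_deg :: "('k \<Rightarrow> nat) \<Rightarrow> ('k \<Rightarrow>\<^sub>0 'a::zero) \<Rightarrow> nat" where
  "low_deg w f = Min (w ` keys f)"

lemma low_deg_le: "m \<in> keys f \<Longrightarrow> low_deg w f \<le> w m"
  unfolding low_deg_def by (simp add: Min_le)

lemma low_deg_attained: "f \<noteq> 0 \<Longrightarrow> \<exists>m\<in>keys f. w m = low_deg w f"
proof -
  assume "f \<noteq> 0"
  then have "Min (w ` keys f) \<in> w ` keys f" by (intro Min_in) auto
  then show ?thesis unfolding low_deg_def by auto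
qed

lemma part_low_deg_neq_0: "f \<noteq> 0 \<Longrightarrow> part (\<lambda>m. w m = low_deg w f) f \<noteq> 0"
proof -
  assume "f \<noteq> 0"
  then obtain m where "m \<in> keys f" "w m = low_deg w f" using low_deg_attained by blast
  then show ?thesis by (rule part_neq_0[where P = "\<lambda>m. w m = low_deg w f"])
qed

lemma low_deg_eqI:
  assumes "\<And>m. m \<in> keys f \<Longrightarrow> a \<le> w m" "part (\<lambda>m. w m = a) f \<noteq> 0"
  shows "low_deg w f = a"
proof -
  from assms(2) obtain m where m: "m \<in> keys f" "w m = a"
    using part_eq_0[of f "\<lambda>m. w m = a"] by auto
  then have "f \<noteq> 0" by auto
  then obtain m' where "m' \<in> keys f" "w m' = low_deg w f" using low_deg_attained by blast
  then show ?thesis using low_deg_le[OF m(1), of w] assms(1) m by fastforce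
qed

lemma part_below_low_deg: "k < low_deg w f \<Longrightarrow> part (\<lambda>m. w m = k) f = 0"
  by (rule part_eq_0) (use low_deg_le[of _ f w] in fastforce)

section \<open>Polynomials in finitely many variables\<close>

definition exps_agree_outside :: "'v set \<Rightarrow> (('v \<Rightarrow>\<^sub>0 nat) \<Rightarrow>\<^sub>0 'a::zero) \<Rightarrow> bool" where
  "exps_agree_outside V f \<longleftrightarrow> (\<forall>v. v \<notin> V \<longrightarrow> (\<forall>m\<in>keys f. \<forall>m'\<in>keys f. lookup m v = lookup m' v))"

lemma exps_agree_outside_empty_eq_single:
  assumes "exps_agree_outside {} f" "m0 \<in> keys f"
  shows "f = single m0 (lookup f m0)"
proof (rule poly_mapping_eqI)
  fix m
  have "m = m0" if "m \<in> keys f"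
  proof (rule poly_mapping_eqI)
    fix v show "lookup m v = lookup m0 v"
      using assms(1) that assms(2) unfolding exps_agree_outside_def by blast
  qed
  then show "lookup f m = lookup (single m0 (lookup f m0)) m"
    by (cases "m = m0") (auto simp: lookup_single in_keys_iff)
qed

lemma exps_agree_outside_part:
  assumes "exps_agree_outside (insert v V) f"
  shows "exps_agree_outside V (part (\<lambda>m. lookup m v = k) f)"
  using assms unfolding exps_agree_outside_def keys_part by (metis (mono_tags, lifting) insert_iff mem_Collect_eq)

text \<open>Induction on the variables whose exponents vary: the parts of \<open>f\<close> and \<open>g\<close> of lowest
  degree in one more variable multiply to the corresponding part of \<open>f g\<close>.\<close>

lemma mult_neq_0_if_exps_agree_outside:
  fixes f g :: "('v \<Rightarrow>\<^sub>0 nat) \<Rightarrow>\<^sub>0 'a::idom"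
  assumes "f \<noteq> 0" "g \<noteq> 0" "exps_agree_outside (set vs) f" "exps_agree_outside (set vs) g"
  shows "f * g \<noteq> 0"
  using assms
proof (induction vs arbitrary: f g)
  case Nil
  obtain m0 n0 where m0: "m0 \<in> keys f" and n0: "n0 \<in> keys g"
    using Nil.prems(1,2) by (metis ex_in_conv keys_eq_empty)
  have "f * g = single (m0 + n0) (lookup f m0 * lookup g n0)"
    using exps_agree_outside_empty_eq_single[OF _ m0] exps_agree_outside_empty_eq_single[OF _ n0] Nil.prems
    by (metis empty_set mult_single)
  moreover have "lookup f m0 * lookup g n0 \<noteq> 0" using m0 n0 by (simp add: in_keys_iff)
  ultimately show ?case by (metis lookup_single_eq lookup_zero)
next
  case (Cons v vs)
  define w where "w = (\<lambda>m::'v \<Rightarrow>\<^sub>0 nat. lookup m v)"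
  have w: "additive_weight w" unfolding w_def by (rule additive_weight_lookup)
  define F G where "F = part (\<lambda>m. w m = low_deg w f) f" and "G = part (\<lambda>m. w m = low_deg w g) g"
  have "F * G \<noteq> 0"
  proof (rule Cons.IH)
    show "F \<noteq> 0" "G \<noteq> 0" unfolding F_def G_def using part_low_deg_neq_0 Cons.prems(1,2) by blast+
    show "exps_agree_outside (set vs) F" "exps_agree_outside (set vs) G"
      unfolding F_def G_def w_def using exps_agree_outside_part Cons.prems(3,4) by simp_all
  qed
  moreover have "part (\<lambda>m. w m = low_deg w f + low_deg w g) (f * g) = F * G"
    unfolding F_def G_def by (rule part_mult_lowest[OF w]) (auto intro: low_deg_le)
  ultimately show ?case by auto
qed

lemma mpoly_mult_neq_0:
  fixes f g :: "('v::finite \<Rightarrow>\<^sub>0 nat) \<Rightarrow>\<^sub>0 'a::idom"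
  assumes "f \<noteq> 0" "g \<noteq> 0"
  shows "f * g \<noteq> 0"
proof -
  obtain vs :: "'v list" where vs: "set vs = UNIV" using finite_list[of "UNIV :: 'v set"] by auto
  show ?thesis
    by (rule mult_neq_0_if_exps_agree_outside[OF assms, of vs]) (simp_all add: exps_agree_outside_def vs)
qed

lemma mpoly_mult_left_cancel:
  fixes f g h :: "('v::finite \<Rightarrow>\<^sub>0 nat) \<Rightarrow>\<^sub>0 'a::idom"
  assumes "h \<noteq> 0" "h * f = h * g"
  shows "f = g"
proof -
  have "h * (f - g) = 0" using assms(2) by (simp add: algebra_simps)
  then show ?thesis using assms(1) mpoly_mult_neq_0[of h "f - g"] by auto
qed

lemma part_low_deg_mult_neq_0:
  fixes f g :: "('v::finite \<Rightarrow>\<^sub>0 nat) \<Rightarrow>\<^sub>0 'a::idom"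
  assumes w: "additive_weight w" and "f \<noteq> 0" "g \<noteq> 0"
  shows "part (\<lambda>m. w m = low_deg w f + low_deg w g) (f * g) \<noteq> 0"
proof -
  have "part (\<lambda>m. w m = low_deg w f + low_deg w g) (f * g) =
      part (\<lambda>m. w m = low_deg w f) f * part (\<lambda>m. w m = low_deg w g) g"
    by (rule part_mult_lowest[OF w]) (auto intro: low_deg_le)
  also have "\<dots> \<noteq> 0"
    by (intro mpoly_mult_neq_0 part_low_deg_neq_0 assms(2,3))
  finally show ?thesis .
qed

lemma low_deg_mult:
  fixes f g :: "('v::finite \<Rightarrow>\<^sub>0 nat) \<Rightarrow>\<^sub>0 'a::idom"
  assumes w: "additive_weight w" and "f \<noteq> 0" "g \<noteq> 0"
  shows "low_deg w (f * g) = low_deg w f + low_deg w g"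
proof (rule low_deg_eqI)
  show "low_deg w f + low_deg w g \<le> w m" if "m \<in> keys (f * g)" for m
    by (rule weight_in_keys_mult_ge[OF w that]) (auto intro: low_deg_le)
  show "part (\<lambda>m. w m = low_deg w f + low_deg w g) (f * g) \<noteq> 0"
    by (rule part_low_deg_mult_neq_0[OF assms])
qed

text \<open>Polarization: with \<open>F\<^sub>i, G\<^sub>i, H\<^sub>i, K\<^sub>i\<close> the parts of \<open>f, g, f', g'\<close> of weight \<open>a + i, b + i, l + i, l' + i\<close>
  (\<open>l, l'\<close> the lowest weights of \<open>f', g'\<close>), the identity
  \<open>H\<^sub>0K\<^sub>0(F\<^sub>0G\<^sub>1 + F\<^sub>1G\<^sub>0) = F\<^sub>0K\<^sub>0(H\<^sub>0G\<^sub>1 + H\<^sub>1G\<^sub>0) + H\<^sub>0G\<^sub>0(F\<^sub>0K\<^sub>1 + F\<^sub>1K\<^sub>0) - F\<^sub>0G\<^sub>0(H\<^sub>0K\<^sub>1 + H\<^sub>1K\<^sub>0)\<close>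
  and \<open>H\<^sub>0K\<^sub>0 \<noteq> 0\<close> show that the weight-\<open>(a + b + 1)\<close> part of \<open>f g\<close> vanishes once the corresponding parts
  of \<open>f g'\<close>, \<open>f' g\<close> and \<open>f' g'\<close> do.\<close>

lemma part_mult_Suc_eq_0_by_polarization:
  fixes f g f' g' :: "('v::finite \<Rightarrow>\<^sub>0 nat) \<Rightarrow>\<^sub>0 'a::idom"
  assumes w: "additive_weight w"
    and f: "\<And>m. m \<in> keys f \<Longrightarrow> a \<le> w m" and g: "\<And>m. m \<in> keys g \<Longrightarrow> b \<le> w m"
    and "f' \<noteq> 0" "g' \<noteq> 0"
    and fg': "part (\<lambda>m. w m = a + low_deg w g' + 1) (f * g') = 0"
    and f'g: "part (\<lambda>m. w m = low_deg w f' + b + 1) (f' * g) = 0"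
    and f'g': "part (\<lambda>m. w m = low_deg w f' + low_deg w g' + 1) (f' * g') = 0"
  shows "part (\<lambda>m. w m = a + b + 1) (f * g) = 0"
proof -
  define l l' where "l = low_deg w f'" and "l' = low_deg w g'"
  define F0 F1 G0 G1 H0 H1 K0 K1 where "F0 = part (\<lambda>m. w m = a) f" and "F1 = part (\<lambda>m. w m = a + 1) f"
    and "G0 = part (\<lambda>m. w m = b) g" and "G1 = part (\<lambda>m. w m = b + 1) g"
    and "H0 = part (\<lambda>m. w m = l) f'" and "H1 = part (\<lambda>m. w m = l + 1) f'"
    and "K0 = part (\<lambda>m. w m = l') g'" and "K1 = part (\<lambda>m. w m = l' + 1) g'"
  have f': "\<And>m. m \<in> keys f' \<Longrightarrow> l \<le> w m" and g': "\<And>m. m \<in> keys g' \<Longrightarrow> l' \<le> w m"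
    unfolding l_def l'_def by (simp_all add: low_deg_le)
  have "part (\<lambda>m. w m = a + l' + 1) (f * g') = F0 * K1 + F1 * K0"
    "part (\<lambda>m. w m = l + b + 1) (f' * g) = H0 * G1 + H1 * G0"
    "part (\<lambda>m. w m = l + l' + 1) (f' * g') = H0 * K1 + H1 * K0"
    and fg: "part (\<lambda>m. w m = a + b + 1) (f * g) = F0 * G1 + F1 * G0"
    unfolding F0_def F1_def G0_def G1_def H0_def H1_def K0_def K1_def
    by (rule part_mult_lowest_Suc[OF w]; fact)+
  then have "F0 * K1 + F1 * K0 = 0" "H0 * G1 + H1 * G0 = 0" "H0 * K1 + H1 * K0 = 0"
    using fg' f'g f'g' by (simp_all add: l_def l'_def)
  moreover have "H0 * K0 * (F0 * G1 + F1 * G0) =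
      F0 * K0 * (H0 * G1 + H1 * G0) + H0 * G0 * (F0 * K1 + F1 * K0) - F0 * G0 * (H0 * K1 + H1 * K0)"
    by (simp add: algebra_simps)
  moreover have "H0 * K0 \<noteq> 0"
    unfolding H0_def K0_def l_def l'_def by (intro mpoly_mult_neq_0 part_low_deg_neq_0 assms)
  ultimately have "F0 * G1 + F1 * G0 = 0" by (metis mpoly_mult_neq_0 add_0 diff_zero mult_zero_right)
  then show ?thesis using fg by simp
qed

lemma Var_power: "(Var x :: ('v,'a::comm_ring_1) mpoly) ^ n = single (single x n) 1"
proof (induction n)
  case (Suc n)
  have "(Var x :: ('v,'a) mpoly) ^ Suc n = Var x ^ n * Var x" by (rule power_Suc2)
  also have "\<dots> = single (single x n) 1 * single (single x 1) 1"
    by (subst Suc) (simp add: Var_def)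
  also have "\<dots> = single (single x (Suc n)) 1"
    by (simp add: mult_single single_add[symmetric])
  finally show ?case .
qed simp

lemma poly_mapping_sum_single: "F = (\<Sum>m\<in>keys F. single m (lookup F m))"
proof (rule poly_mapping_eqI)
  fix k
  have "lookup (\<Sum>m\<in>keys F. single m (lookup F m)) k = (\<Sum>m\<in>keys F. if m = k then lookup F m else 0)"
    by (simp add: lookup_sum lookup_single when_def)
  also have "\<dots> = lookup F k" by (simp add: sum.delta' in_keys_iff)
  finally show "lookup F k = lookup (\<Sum>m\<in>keys F. single m (lookup F m)) k" by simp
qed

lemma monomial_factor_if_keys_ge:
  fixes F :: "('v \<Rightarrow>\<^sub>0 nat) \<Rightarrow>\<^sub>0 'a::comm_ring_1"
  assumes "\<And>m v. m \<in> keys F \<Longrightarrow> lookup k v \<le> lookup m v"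
  obtains c where "F = single k 1 * c" "\<And>m'. m' \<in> keys c \<Longrightarrow> \<exists>m\<in>keys F. m' = m - k"
proof
  define c where "c = (\<Sum>m\<in>keys F. single (m - k) (lookup F m))"
  have "single k 1 * single (m - k) (lookup F m) = single m (lookup F m)" if "m \<in> keys F" for m
  proof -
    have "k + (m - k) = m"
      by (rule poly_mapping_eqI) (use assms[OF that] in \<open>simp add: lookup_add lookup_minus\<close>)
    then show ?thesis by (simp add: mult_single)
  qed
  then have "single k 1 * c = (\<Sum>m\<in>keys F. single m (lookup F m))"
    by (simp add: c_def sum_distrib_left)
  then show "F = single k 1 * c" using poly_mapping_sum_single[of F] by simp
  show "\<exists>m\<in>keys F. m' = m - k" if "m' \<in> keys c" for m'
    using that keys_sum[of "\<lambda>m. single (m - k) (lookup F m)" "keys F"]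
    by (auto simp: c_def split: if_splits)
qed

section \<open>Ideals and sums of products\<close>

lemma ideal_zero: "is_ideal I \<Longrightarrow> 0 \<in> I" unfolding is_ideal_def by blast
lemma ideal_add: "is_ideal I \<Longrightarrow> a \<in> I \<Longrightarrow> b \<in> I \<Longrightarrow> a + b \<in> I" unfolding is_ideal_def by blast
lemma ideal_mult_left: "is_ideal I \<Longrightarrow> a \<in> I \<Longrightarrow> r * a \<in> I" unfolding is_ideal_def by blast

lemma ideal_mult_right: "is_ideal I \<Longrightarrow> a \<in> I \<Longrightarrow> a * r \<in> I"
  using ideal_mult_left[of I a r] by (simp add: mult.commute)

lemma ideal_diff: "is_ideal I \<Longrightarrow> a \<in> I \<Longrightarrow> b \<in> I \<Longrightarrow> a - b \<in> I"
  using ideal_add[of I a "(- 1) * b"] ideal_mult_left[of I b "- 1"] by simp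

lemma ideal_sum: "is_ideal I \<Longrightarrow> (\<And>x. x \<in> A \<Longrightarrow> f x \<in> I) \<Longrightarrow> sum f A \<in> I"
  by (induction A rule: infinite_finite_induct) (auto intro: ideal_zero ideal_add)

lemma ideal_eq_UNIV: "is_ideal I \<Longrightarrow> 1 \<in> I \<Longrightarrow> I = UNIV"
  using ideal_mult_left[of I 1] by auto

lemma is_idealI:
  assumes "0 \<in> I" "\<And>a b. a \<in> I \<Longrightarrow> b \<in> I \<Longrightarrow> a + b \<in> I" "\<And>r a. a \<in> I \<Longrightarrow> r * a \<in> I"
  shows "is_ideal I"
  using assms unfolding is_ideal_def by blast

lemma is_ideal_ideal_gen: "is_ideal (ideal_gen S)"
  unfolding ideal_gen_def is_ideal_def by blast

lemma ideal_gen_subset: "S \<subseteq> ideal_gen S"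
  unfolding ideal_gen_def by blast

lemma ideal_gen_least: "is_ideal I \<Longrightarrow> S \<subseteq> I \<Longrightarrow> ideal_gen S \<subseteq> I"
  unfolding ideal_gen_def by blast

lemma mult_in_ideal_mult: "a \<in> I \<Longrightarrow> b \<in> J \<Longrightarrow> a * b \<in> ideal_mult I J"
  unfolding ideal_mult_def by (rule subsetD[OF ideal_gen_subset]) blast

lemma ideal_mult_least:
  "is_ideal K \<Longrightarrow> (\<And>a b. a \<in> I \<Longrightarrow> b \<in> J \<Longrightarrow> a * b \<in> K) \<Longrightarrow> ideal_mult I J \<subseteq> K"
  unfolding ideal_mult_def by (rule ideal_gen_least) auto

lemma ideal_mult_subset_left: "is_ideal I \<Longrightarrow> ideal_mult I J \<subseteq> I"
  by (rule ideal_mult_least) (auto intro: ideal_mult_right)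

lemma ideal_mult_subset_right: "is_ideal J \<Longrightarrow> ideal_mult I J \<subseteq> J"
  by (rule ideal_mult_least) (auto intro: ideal_mult_left)

lemma nz_ideal_nonzero: "nz_ideal I \<Longrightarrow> \<exists>a\<in>I. a \<noteq> 0"
  unfolding nz_ideal_def using ideal_zero by blast

inductive_set sum_prods :: "'r::comm_ring_1 set \<Rightarrow> 'r set \<Rightarrow> 'r set" for M N where
  zero: "0 \<in> sum_prods M N"
| add_prod: "f \<in> M \<Longrightarrow> g \<in> N \<Longrightarrow> e \<in> sum_prods M N \<Longrightarrow> f * g + e \<in> sum_prods M N"

lemma sum_prods_add: "e \<in> sum_prods M N \<Longrightarrow> e' \<in> sum_prods M N \<Longrightarrow> e + e' \<in> sum_prods M N"
  by (induction e rule: sum_prods.induct) (auto simp: add.assoc intro: sum_prods.intros)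

lemma sum_prods_commute: "e \<in> sum_prods M N \<Longrightarrow> e \<in> sum_prods N M"
proof (induction e rule: sum_prods.induct)
  case (add_prod f g e)
  have "g * f + e \<in> sum_prods N M" by (rule sum_prods.add_prod[OF add_prod(2,1,4)])
  then show ?case by (simp add: mult.commute)
qed (rule sum_prods.zero)

lemma mult_in_sum_prods: "f \<in> M \<Longrightarrow> g \<in> N \<Longrightarrow> f * g \<in> sum_prods M N"
  using sum_prods.add_prod[OF _ _ sum_prods.zero, of f M g N] by simp

lemma ideal_power_ge: "is_ideal J \<Longrightarrow> u ^ e \<in> J \<Longrightarrow> e \<le> k \<Longrightarrow> u ^ k \<in> J"
  using ideal_mult_right[of J "u ^ e" "u ^ (k - e)"] by (simp flip: power_add)

lemma ideal_power_add:
  fixes u v :: "'r::comm_ring_1"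
  assumes J: "is_ideal J" and u: "u ^ e \<in> J" and v: "v ^ e \<in> J"
  shows "(u + v) ^ (2 * e) \<in> J"
  unfolding binomial_ring
proof (rule ideal_sum[OF J])
  fix k assume "k \<in> {..2 * e}"
  then have "e \<le> k \<or> e \<le> 2 * e - k" by auto
  then have "u ^ k * v ^ (2 * e - k) \<in> J"
    using ideal_power_ge[OF J u, of k] ideal_power_ge[OF J v, of "2 * e - k"]
    ideal_mult_left[OF J] ideal_mult_right[OF J] by blast
  then show "of_nat (2 * e choose k) * u ^ k * v ^ (2 * e - k) \<in> J"
    using ideal_mult_left[OF J] by (simp add: mult.assoc)
qed

lemma part_sum_prods_eq_0:
  assumes "\<forall>f\<in>M. \<forall>g\<in>N. part P (f * g) = 0" "e \<in> sum_prods M N"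
  shows "part P e = 0"
  using assms(2) by induction (simp_all add: part_add assms(1))

section \<open>Grading by the degree in two distinguished variables\<close>

locale two_vars =
  fixes x1 x2 :: "'v::finite"
  assumes distinct_vars: "x1 \<noteq> x2"
begin

abbreviation "deg1 \<equiv> \<lambda>m::'v \<Rightarrow>\<^sub>0 nat. lookup m x1"
abbreviation "deg2 \<equiv> \<lambda>m::'v \<Rightarrow>\<^sub>0 nat. lookup m x2"
abbreviation "deg12 \<equiv> \<lambda>m::'v \<Rightarrow>\<^sub>0 nat. lookup m x1 + lookup m x2"

definition mon :: "nat \<Rightarrow> nat \<Rightarrow> ('v, 'a::comm_ring_1) mpoly" where
  "mon a b = single (single x1 a + single x2 b) 1"

definition homog :: "nat \<Rightarrow> ('v, 'a::comm_ring_1) mpoly \<Rightarrow> bool" where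
  "homog p f \<longleftrightarrow> (\<forall>m\<in>keys f. deg12 m = p)"

text \<open>\<open>const12\<close> singles out the coefficient ring \<open>D[X\<^sub>v : v \<noteq> x1, x2]\<close> of the grading by \<open>deg12\<close>.\<close>

definition const12 :: "('v, 'a::comm_ring_1) mpoly \<Rightarrow> bool" where
  "const12 s \<longleftrightarrow> (\<forall>m\<in>keys s. deg1 m = 0 \<and> deg2 m = 0)"

definition form_module :: "nat \<Rightarrow> ('v, 'a::comm_ring_1) mpoly set \<Rightarrow> bool" where
  "form_module p M \<longleftrightarrow> (\<forall>f\<in>M. homog p f) \<and> 0 \<in> M \<and> (\<forall>f\<in>M. \<forall>g\<in>M. f + g \<in> M \<and> f - g \<in> M)
     \<and> (\<forall>s f. const12 s \<longrightarrow> f \<in> M \<longrightarrow> s * f \<in> M)"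

lemma additive_deg1: "additive_weight deg1"
  and additive_deg2: "additive_weight deg2"
  and additive_deg12: "additive_weight deg12"
  unfolding additive_weight_def by (simp_all add: lookup_add)

lemma const12_deg12: "const12 s \<Longrightarrow> m \<in> keys s \<Longrightarrow> deg12 m = 0"
  and const12_deg2: "const12 s \<Longrightarrow> m \<in> keys s \<Longrightarrow> deg2 m = 0"
  unfolding const12_def by auto

lemma const12_part_deg12_0: "const12 (part (\<lambda>m. deg12 m = 0) r)"
  unfolding const12_def by (auto simp: keys_part)

lemma const12_zero: "const12 0"
  and const12_add: "const12 s \<Longrightarrow> const12 t \<Longrightarrow> const12 (s + t)"
  and const12_mult: "const12 s \<Longrightarrow> const12 t \<Longrightarrow> const12 (s * t)"
  unfolding const12_def
  by (auto dest!: in_keys_addD dest!: set_mp[OF keys_mult] simp: lookup_add)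

lemma homog_zero: "homog p 0"
  and homog_add: "homog p f \<Longrightarrow> homog p g \<Longrightarrow> homog p (f + g)"
  and homog_mult: "homog p f \<Longrightarrow> homog q g \<Longrightarrow> homog (p + q) (f * g)"
  unfolding homog_def by (auto dest!: in_keys_addD dest!: set_mp[OF keys_mult] simp: lookup_add)

lemma homog_const12_mult: "const12 s \<Longrightarrow> homog p f \<Longrightarrow> homog p (s * f)"
  using homog_mult[of 0 s p f] unfolding homog_def const12_def by fastforce

lemma homog_part_deg12: "homog p (part (\<lambda>m. deg12 m = p) f)"
  unfolding homog_def by (auto simp: keys_part)

lemma homog_deg2_le: "homog p f \<Longrightarrow> m \<in> keys f \<Longrightarrow> deg2 m \<le> p"
  unfolding homog_def by fastforce

lemma homog_low_deg_le:
  assumes "homog p f" "f \<noteq> 0"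
  shows "low_deg deg2 f \<le> p" "low_deg deg1 f + low_deg deg2 f \<le> p"
proof -
  obtain m where m: "m \<in> keys f" using assms(2) by (metis ex_in_conv keys_eq_empty)
  have "deg12 m = p" using assms(1) m unfolding homog_def by blast
  then show "low_deg deg2 f \<le> p" "low_deg deg1 f + low_deg deg2 f \<le> p"
    using low_deg_le[OF m, of deg2] low_deg_le[OF m, of deg1] by auto
qed

lemma form_module_homog: "form_module p M \<Longrightarrow> f \<in> M \<Longrightarrow> homog p f"
  and form_module_diff: "form_module p M \<Longrightarrow> f \<in> M \<Longrightarrow> g \<in> M \<Longrightarrow> f - g \<in> M"
  and form_module_const12_mult: "form_module p M \<Longrightarrow> const12 s \<Longrightarrow> f \<in> M \<Longrightarrow> s * f \<in> M"
  unfolding form_module_def by blast+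

lemma lookup_mon_key:
  "lookup (single x1 a + single x2 b :: 'v \<Rightarrow>\<^sub>0 nat) x1 = a"
  "lookup (single x1 a + single x2 b :: 'v \<Rightarrow>\<^sub>0 nat) x2 = b"
  using distinct_vars by (auto simp: lookup_add lookup_single when_def)

lemma keys_mon: "keys (mon a b) = {single x1 a + single x2 b}"
  unfolding mon_def by simp

lemma mon_neq_0: "mon a b \<noteq> 0"
  unfolding mon_def by (metis lookup_single_eq lookup_zero zero_neq_one)

lemma mon_mult: "mon a b * mon c e = mon (a + c) (b + e)"
  unfolding mon_def by (simp add: mult_single single_add ac_simps)

lemma Var_power_mult_eq_mon: "Var x1 ^ a * Var x2 ^ b = mon a b"
  unfolding Var_power mon_def by (simp add: mult_single)

lemma Var1_power: "Var x1 ^ a = mon a 0"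
  and Var2_power: "Var x2 ^ b = mon 0 b"
  using Var_power_mult_eq_mon[of a 0] Var_power_mult_eq_mon[of 0 b] by simp_all

lemma homog_mon: "a + b = d \<Longrightarrow> homog d (mon a b)"
  unfolding homog_def keys_mon by (simp add: lookup_mon_key)

lemma part_mon: "part P (mon a b) = (if P (single x1 a + single x2 b) then mon a b else 0)"
  by (auto intro: part_eq_self part_eq_0 simp: keys_mon)

lemma part_deg2_mon: "part (\<lambda>m. deg2 m = t) (mon a b) = (if b = t then mon a b else 0)"
  and part_deg1_mon: "part (\<lambda>m. deg1 m = t) (mon a b) = (if a = t then mon a b else 0)"
  by (simp_all add: part_mon lookup_mon_key)

lemma low_deg2_mon: "low_deg deg2 (mon a b) = b"
  and low_deg1_mon: "low_deg deg1 (mon a b) = a"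
  by (rule low_deg_eqI; auto simp: keys_mon lookup_mon_key part_deg2_mon part_deg1_mon mon_neq_0)+

lemma eq_const12_mult_mon:
  assumes "\<And>m. m \<in> keys F \<Longrightarrow> deg1 m = a \<and> deg2 m = b"
  obtains c where "const12 c" "F = c * mon a b"
proof -
  define k where "k = single x1 a + single x2 b"
  have le: "lookup k v \<le> lookup m v" if "m \<in> keys F" for m v
    using assms[OF that] distinct_vars by (auto simp: k_def lookup_add lookup_single when_def)
  obtain c where c: "F = single k 1 * c" "\<And>m'. m' \<in> keys c \<Longrightarrow> \<exists>m\<in>keys F. m' = m - k"
    using monomial_factor_if_keys_ge[of F k] le by blast
  have "const12 c"
    unfolding const12_def using c(2) assms by (fastforce simp: lookup_minus k_def lookup_mon_key)
  moreover have "F = c * mon a b" using c(1) unfolding mon_def k_def by (simp add: mult.commute)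
  ultimately show ?thesis by (rule that)
qed

lemma part_deg2_eq_const12_mult_mon:
  assumes "homog p f"
  obtains c where "const12 c" "part (\<lambda>m. deg2 m = t) f = c * mon (p - t) t"
proof (rule eq_const12_mult_mon[of "part (\<lambda>m. deg2 m = t) f" "p - t" t])
  show "deg1 m = p - t \<and> deg2 m = t" if "m \<in> keys (part (\<lambda>m. deg2 m = t) f)" for m
    using that assms by (auto simp: homog_def keys_part)
qed (rule that)

lemma part_deg2_const12_mult:
  "const12 s \<Longrightarrow> part (\<lambda>m. deg2 m = k) (s * f) = s * part (\<lambda>m. deg2 m = k) f"
  using part_mult_homogeneous[OF additive_deg2, of s 0 k f] const12_deg2[of s] by simp

lemma part_deg12_const12_mult:
  "const12 s \<Longrightarrow> part (\<lambda>m. deg12 m = k) (s * f) = s * part (\<lambda>m. deg12 m = k) f"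
  using part_mult_homogeneous[OF additive_deg12, of s 0 k f] const12_deg12[of s] by simp

lemma deg2_in_keys_const12_mult_ge:
  assumes "const12 s" "m \<in> keys (s * f)" "\<And>m. m \<in> keys f \<Longrightarrow> l \<le> deg2 m"
  shows "l \<le> deg2 m"
  using weight_in_keys_mult_ge[OF additive_deg2 assms(2), of 0 l] assms(3) const12_deg2[OF assms(1)] by simp

lemma low_deg_const12_mult:
  fixes s e :: "('v, 'a::idom) mpoly"
  assumes "const12 s" "s \<noteq> 0" "e \<noteq> 0"
  shows "low_deg deg2 (s * e) = low_deg deg2 e" "low_deg deg1 (s * e) = low_deg deg1 e"
proof -
  obtain m where m: "m \<in> keys s" using assms(2) by (metis ex_in_conv keys_eq_empty)
  have "low_deg deg2 s = 0" "low_deg deg1 s = 0"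
    using low_deg_le[OF m, of deg2] low_deg_le[OF m, of deg1] assms(1) m unfolding const12_def by auto
  then show "low_deg deg2 (s * e) = low_deg deg2 e" "low_deg deg1 (s * e) = low_deg deg1 e"
    using low_deg_mult[OF additive_deg2 assms(2,3)] low_deg_mult[OF additive_deg1 assms(2,3)] by simp_all
qed

lemma sum_prods_const12_mult:
  assumes "form_module p M" "const12 s" "e \<in> sum_prods M N"
  shows "s * e \<in> sum_prods M N"
  using assms(3)
proof (induction e rule: sum_prods.induct)
  case (add_prod f g e)
  have "s * (f * g + e) = (s * f) * g + s * e" by (simp add: algebra_simps)
  then show ?case
    using sum_prods.add_prod[OF form_module_const12_mult[OF assms(1,2) add_prod(1)] add_prod(2,4)] by simp
qed (simp add: sum_prods.zero)


section \<open>Proper factorizations of ideals generated by forms\<close>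

lemma Var_combination_if_deg12_pos:
  assumes "\<And>m. m \<in> keys h \<Longrightarrow> 1 \<le> deg12 m"
  obtains a b where "h = Var x1 * a + Var x2 * b"
proof -
  define h1 h2 where "h1 = part (\<lambda>m. 1 \<le> deg1 m) h" and "h2 = part (\<lambda>m. \<not> 1 \<le> deg1 m) h"
  have "lookup (single x1 1) v \<le> lookup m v" if "m \<in> keys h1" for m v
    using that by (auto simp: h1_def keys_part lookup_single when_def)
  then obtain a where a: "h1 = single (single x1 1) 1 * a"
    using monomial_factor_if_keys_ge[of h1 "single x1 1"] by blast
  have "lookup (single x2 1) v \<le> lookup m v" if "m \<in> keys h2" for m v
    using that assms by (fastforce simp: h2_def keys_part lookup_single when_def)
  then obtain b where b: "h2 = single (single x2 1) 1 * b"
    using monomial_factor_if_keys_ge[of h2 "single x2 1"] by blast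
  have "h = Var x1 * a + Var x2 * b"
    using part_add_part_not[of "\<lambda>m. 1 \<le> deg1 m" h]
    unfolding Var_def h1_def[symmetric] h2_def[symmetric] a b by (rule sym)
  then show ?thesis by (rule that)
qed

text \<open>Writing \<open>u = 1 + h\<close> with \<open>h \<in> (x1, x2)\<close>, the powers of \<open>x1, x2\<close> in \<open>J\<close> give \<open>h\<^sup>2\<^sup>e \<in> J\<close>,
  hence \<open>1 = u (1 - h + \<dots> - h\<^sup>2\<^sup>e\<^sup>-\<^sup>1) + h\<^sup>2\<^sup>e \<in> J\<close>.\<close>

lemma one_in_ideal_if_deg12_0_part_one:
  assumes J: "is_ideal J" and e: "Var x1 ^ e \<in> J" "Var x2 ^ e \<in> J"
    and u: "u \<in> J" "part (\<lambda>m. deg12 m = 0) u = 1"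
  shows "1 \<in> J"
proof -
  define h where "h = u - 1"
  have "part (\<lambda>m. deg12 m = 0) (1 :: ('v, 'a) mpoly) = 1" by (rule part_eq_self) simp
  then have "part (\<lambda>m. deg12 m = 0) h = 0"
    unfolding h_def part_diff u(2) by simp
  then have "1 \<le> deg12 m" if "m \<in> keys h" for m
    using part_neq_0[of m h "\<lambda>m. deg12 m = 0", OF that] by (cases "deg12 m") auto
  then obtain a b where hab: "h = Var x1 * a + Var x2 * b" by (rule Var_combination_if_deg12_pos)
  have "(Var x1 * a) ^ e \<in> J" "(Var x2 * b) ^ e \<in> J"
    using e by (simp_all add: power_mult_distrib ideal_mult_right[OF J])
  then have hJ: "h ^ (2 * e) \<in> J" unfolding hab by (rule ideal_power_add[OF J])
  have "1 - (- h) ^ (2 * e) = u * (\<Sum>i<2*e. (- h) ^ i)"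
    using one_diff_power_eq[of "- h" "2 * e"] by (simp add: h_def)
  then have "1 = u * (\<Sum>i<2*e. (- h) ^ i) + h ^ (2 * e)"
    by (simp add: algebra_simps)
  also have "\<dots> \<in> J" by (rule ideal_add[OF J ideal_mult_right[OF J u(1)] hJ])
  finally show ?thesis .
qed

text \<open>Invariant of the induction: the \<open>x2\<close>-free part of a sum of products with degree-0 parts of
  elements of \<open>J\<close> is \<open>c x1\<^sup>d\<close>, where \<open>c\<close> is itself the degree-0 part of an element of \<open>J\<close>.\<close>

lemma one_in_ideal_if_sum_prods_deg12_0:
  fixes M :: "('v, 'a::idom) mpoly set"
  assumes J: "is_ideal J" and e: "Var x1 ^ e \<in> J" "Var x2 ^ e \<in> J"
    and M: "form_module d M"
    and \<gamma>: "\<gamma> \<in> sum_prods M ((\<lambda>j. part (\<lambda>m. deg12 m = 0) j) ` J)" "part (\<lambda>m. deg2 m = 0) \<gamma> = mon d 0"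
  shows "1 \<in> J"
proof -
  have "\<exists>u\<in>J. \<exists>c. const12 c \<and> part (\<lambda>m. deg2 m = 0) \<epsilon> = c * mon d 0 \<and> part (\<lambda>m. deg12 m = 0) u = c"
    if "\<epsilon> \<in> sum_prods M ((\<lambda>j. part (\<lambda>m. deg12 m = 0) j) ` J)" for \<epsilon>
    using that
  proof (induction \<epsilon> rule: sum_prods.induct)
    case zero
    then show ?case using ideal_zero[OF J] const12_zero by (intro bexI[of _ 0]) auto
  next
    case (add_prod f g \<epsilon>)
    from add_prod.IH obtain u c where u: "u \<in> J" "const12 c"
      "part (\<lambda>m. deg2 m = 0) \<epsilon> = c * mon d 0" "part (\<lambda>m. deg12 m = 0) u = c" by blast
    from add_prod(2) obtain j where j: "j \<in> J" "g = part (\<lambda>m. deg12 m = 0) j" by blast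
    have g: "const12 g" using j(2) const12_part_deg12_0 by simp
    obtain cf where cf: "const12 cf" "part (\<lambda>m. deg2 m = 0) f = cf * mon (d - 0) 0"
      by (rule part_deg2_eq_const12_mult_mon[OF form_module_homog[OF M add_prod(1)]])
    have "part (\<lambda>m. deg2 m = 0) (f * g + \<epsilon>) = (g * cf + c) * mon d 0"
      using part_deg2_const12_mult[OF g, of 0 f] cf u(3) by (simp add: part_add algebra_simps)
    moreover have "part (\<lambda>m. deg12 m = 0) (cf * j + u) = g * cf + c"
      using part_deg12_const12_mult[OF cf(1), of 0 j] j(2) u(4) by (simp add: part_add mult.commute)
    moreover have "cf * j + u \<in> J" by (rule ideal_add[OF J ideal_mult_left[OF J j(1)] u(1)])
    moreover have "const12 (g * cf + c)" by (rule const12_add[OF const12_mult[OF g cf(1)] u(2)])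
    ultimately show ?case by blast
  qed
  then obtain u c where u: "u \<in> J" "part (\<lambda>m. deg2 m = 0) \<gamma> = c * mon d 0" "part (\<lambda>m. deg12 m = 0) u = c"
    using \<gamma>(1) by blast
  have "mon d 0 * c = mon d 0 * 1" using u(2) \<gamma>(2) by (simp add: mult.commute)
  then have "c = 1" by (rule mpoly_mult_left_cancel[OF mon_neq_0])
  then show ?thesis using one_in_ideal_if_deg12_0_part_one[OF J e u(1)] u(3) by simp
qed

definition const12_closed :: "(('v, 'a::comm_ring_1) mpoly \<Rightarrow> bool) \<Rightarrow> bool" where
  "const12_closed P \<longleftrightarrow> P 0 \<and> (\<forall>F F'. P F \<longrightarrow> P F' \<longrightarrow> P (F + F')) \<and> (\<forall>s F. const12 s \<longrightarrow> P F \<longrightarrow> P (s * F))"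

definition order_ideal :: "nat \<Rightarrow> (('v, 'a::comm_ring_1) mpoly \<Rightarrow> bool) \<Rightarrow> ('v, 'a) mpoly set" where
  "order_ideal d P = {h. (\<forall>m\<in>keys h. d \<le> deg12 m) \<and> P (part (\<lambda>m. deg12 m = d) h)}"

lemma is_ideal_order_ideal:
  assumes P: "const12_closed P"
  shows "is_ideal (order_ideal d P)"
proof (rule is_idealI)
  show "0 \<in> order_ideal d P" using P by (simp add: order_ideal_def const12_closed_def)
next
  fix a b assume a: "a \<in> order_ideal d P" and b: "b \<in> order_ideal d P"
  have "d \<le> deg12 m" if "m \<in> keys (a + b)" for m
    using in_keys_addD[OF that] a b unfolding order_ideal_def by blast
  moreover have "P (part (\<lambda>m. deg12 m = d) (a + b))"
    using P a b unfolding order_ideal_def const12_closed_def part_add by blast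
  ultimately show "a + b \<in> order_ideal d P" by (simp add: order_ideal_def)
next
  fix r a assume a: "a \<in> order_ideal d P"
  have "d \<le> deg12 m" if "m \<in> keys (r * a)" for m
    using weight_in_keys_mult_ge[OF additive_deg12 that, of 0 d] a by (simp add: order_ideal_def)
  moreover have "P (part (\<lambda>m. deg12 m = d) (r * a))"
  proof -
    have "part (\<lambda>m. deg12 m = 0 + d) (r * a) = part (\<lambda>m. deg12 m = 0) r * part (\<lambda>m. deg12 m = d) a"
      by (rule part_mult_lowest[OF additive_deg12]) (use a in \<open>auto simp: order_ideal_def\<close>)
    moreover have "P (part (\<lambda>m. deg12 m = 0) r * part (\<lambda>m. deg12 m = d) a)"
      using P a const12_part_deg12_0[of r] unfolding order_ideal_def const12_closed_def by blast
    ultimately show ?thesis by simp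
  qed
  ultimately show "r * a \<in> order_ideal d P" by (simp add: order_ideal_def)
qed

lemma order_ideal_deg12_ge: "h \<in> order_ideal d P \<Longrightarrow> m \<in> keys h \<Longrightarrow> d \<le> deg12 m"
  unfolding order_ideal_def by blast

lemma homog_in_order_ideal: "homog d \<gamma> \<Longrightarrow> P \<gamma> \<Longrightarrow> \<gamma> \<in> order_ideal d P"
  unfolding order_ideal_def homog_def by (simp add: part_eq_self)

lemma const12_closed_sum_prods: "form_module p M \<Longrightarrow> const12_closed (\<lambda>e. e \<in> sum_prods M N)"
  unfolding const12_closed_def by (auto intro: sum_prods.zero sum_prods_add sum_prods_const12_mult)

definition initial_forms :: "nat \<Rightarrow> ('v, 'a::comm_ring_1) mpoly set \<Rightarrow> ('v, 'a) mpoly set" where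
  "initial_forms k K = (\<lambda>a. part (\<lambda>m. deg12 m = k) a) ` K"

lemma form_module_initial_forms:
  fixes K :: "('v, 'a::comm_ring_1) mpoly set"
  assumes K: "is_ideal K"
  shows "form_module k (initial_forms k K)"
  unfolding form_module_def
proof (intro conjI ballI allI impI)
  show "0 \<in> initial_forms k K" using ideal_zero[OF K] by (force simp: initial_forms_def)
  fix f g assume "f \<in> initial_forms k K" "g \<in> initial_forms k K"
  then obtain a b where ab: "a \<in> K" "b \<in> K" "f = part (\<lambda>m. deg12 m = k) a" "g = part (\<lambda>m. deg12 m = k) b"
    by (auto simp: initial_forms_def)
  show "f + g \<in> initial_forms k K"
    using ab ideal_add[OF K ab(1,2)] unfolding initial_forms_def
    by (intro image_eqI[of _ _ "a + b"]) (auto simp: part_add)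
  show "f - g \<in> initial_forms k K"
    using ab ideal_diff[OF K ab(1,2)] unfolding initial_forms_def
    by (intro image_eqI[of _ _ "a - b"]) (auto simp: part_diff)
next
  show "homog k f" if "f \<in> initial_forms k K" for f
    using that homog_part_deg12 by (auto simp: initial_forms_def)
next
  fix s f :: "('v, 'a) mpoly" assume s: "const12 s" and "f \<in> initial_forms k K"
  then obtain a where a: "a \<in> K" "f = part (\<lambda>m. deg12 m = k) a" by (auto simp: initial_forms_def)
  show "s * f \<in> initial_forms k K"
    using a ideal_mult_left[OF K a(1)] part_deg12_const12_mult[OF s, of k a] unfolding initial_forms_def
    by (intro image_eqI[of _ _ "s * a"]) auto
qed

definition ideal_order :: "('v, 'a::comm_ring_1) mpoly set \<Rightarrow> nat" where
  "ideal_order I = (LEAST k. \<exists>a\<in>I. a \<noteq> 0 \<and> low_deg deg12 a = k)"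

lemma ideal_order_le: "a \<in> I \<Longrightarrow> m \<in> keys a \<Longrightarrow> ideal_order I \<le> deg12 m"
proof -
  assume a: "a \<in> I" and m: "m \<in> keys a"
  then have "a \<noteq> 0" by auto
  then have "ideal_order I \<le> low_deg deg12 a"
    unfolding ideal_order_def by (intro Least_le) (use a in blast)
  then show ?thesis using low_deg_le[OF m, of deg12] by simp
qed

lemma ideal_order_attained: "nz_ideal I \<Longrightarrow> \<exists>a\<in>I. a \<noteq> 0 \<and> low_deg deg12 a = ideal_order I"
  unfolding ideal_order_def by (rule LeastI_ex) (use nz_ideal_nonzero in blast)

lemma initial_form_mult:
  assumes "a \<in> I" "b \<in> J"
  shows "part (\<lambda>m. deg12 m = ideal_order I + ideal_order J) (a * b) =
    part (\<lambda>m. deg12 m = ideal_order I) a * part (\<lambda>m. deg12 m = ideal_order J) b"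
  by (rule part_mult_lowest[OF additive_deg12]) (use assms in \<open>auto intro: ideal_order_le\<close>)

lemma ideal_mult_subset_order_ideal:
  assumes "is_ideal I" "is_ideal J"
  shows "ideal_mult I J \<subseteq> order_ideal (ideal_order I + ideal_order J)
    (\<lambda>\<epsilon>. \<epsilon> \<in> sum_prods (initial_forms (ideal_order I) I) (initial_forms (ideal_order J) J))"
proof (rule ideal_mult_least[OF is_ideal_order_ideal[OF const12_closed_sum_prods]])
  show "form_module (ideal_order I) (initial_forms (ideal_order I) I)"
    by (rule form_module_initial_forms[OF assms(1)])
  fix a b assume ab: "a \<in> I" "b \<in> J"
  have "ideal_order I + ideal_order J \<le> deg12 m" if "m \<in> keys (a * b)" for m
    by (rule weight_in_keys_mult_ge[OF additive_deg12 that]) (auto intro: ideal_order_le ab)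
  moreover have "part (\<lambda>m. deg12 m = ideal_order I + ideal_order J) (a * b)
      \<in> sum_prods (initial_forms (ideal_order I) I) (initial_forms (ideal_order J) J)"
    unfolding initial_form_mult[OF ab] initial_forms_def using ab by (blast intro: mult_in_sum_prods)
  ultimately show "a * b \<in> order_ideal (ideal_order I + ideal_order J)
      (\<lambda>\<epsilon>. \<epsilon> \<in> sum_prods (initial_forms (ideal_order I) I) (initial_forms (ideal_order J) J))"
    by (simp add: order_ideal_def)
qed

lemma ideal_mult_order_attained:
  fixes I J :: "('v, 'a::idom) mpoly set"
  assumes "nz_ideal I" "nz_ideal J"
  obtains c m where "c \<in> ideal_mult I J" "m \<in> keys c" "deg12 m = ideal_order I + ideal_order J"
proof -
  obtain a where a: "a \<in> I" "a \<noteq> 0" "low_deg deg12 a = ideal_order I"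
    using ideal_order_attained[OF assms(1)] by auto
  obtain b where b: "b \<in> J" "b \<noteq> 0" "low_deg deg12 b = ideal_order J"
    using ideal_order_attained[OF assms(2)] by auto
  obtain m where "m \<in> keys (a * b)" "deg12 m = low_deg deg12 (a * b)"
    using low_deg_attained[OF mpoly_mult_neq_0[OF a(2) b(2)], of deg12] by auto
  then show ?thesis
    using that[OF mult_in_ideal_mult[OF a(1) b(1)]] low_deg_mult[OF additive_deg12 a(2) b(2)] a(3) b(3) by simp
qed

lemma ideal_order_add_eq:
  fixes I J :: "('v, 'a::idom) mpoly set"
  assumes I: "nz_ideal I" and J: "nz_ideal J" and IJ: "ideal_mult I J \<subseteq> order_ideal d P"
    and \<gamma>: "\<gamma> \<in> ideal_mult I J" "\<gamma> \<noteq> 0" "homog d \<gamma>"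
  shows "ideal_order I + ideal_order J = d"
proof (rule antisym)
  obtain m where m: "m \<in> keys \<gamma>" using \<gamma>(2) by (metis ex_in_conv keys_eq_empty)
  have "ideal_mult I J \<subseteq> order_ideal (ideal_order I + ideal_order J)
      (\<lambda>\<epsilon>. \<epsilon> \<in> sum_prods (initial_forms (ideal_order I) I) (initial_forms (ideal_order J) J))"
    using I J unfolding nz_ideal_def by (intro ideal_mult_subset_order_ideal) auto
  then have "ideal_order I + ideal_order J \<le> deg12 m" using \<gamma>(1) m by (blast intro: order_ideal_deg12_ge)
  then show "ideal_order I + ideal_order J \<le> d" using \<gamma>(3) m unfolding homog_def by simp
  obtain c m where "c \<in> ideal_mult I J" "m \<in> keys c" "deg12 m = ideal_order I + ideal_order J"
    by (rule ideal_mult_order_attained[OF I J])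
  then show "d \<le> ideal_order I + ideal_order J" using IJ by (metis order_ideal_deg12_ge subsetD)
qed

lemma initial_forms_mult_in_order_ideal:
  assumes "ideal_mult I J \<subseteq> order_ideal (ideal_order I + ideal_order J) P"
    and "f \<in> initial_forms (ideal_order I) I" "g \<in> initial_forms (ideal_order J) J"
  shows "P (f * g)"
proof -
  obtain a where a: "a \<in> I" "f = part (\<lambda>m. deg12 m = ideal_order I) a"
    using assms(2) unfolding initial_forms_def by (rule imageE) simp
  obtain b where b: "b \<in> J" "g = part (\<lambda>m. deg12 m = ideal_order J) b"
    using assms(3) unfolding initial_forms_def by (rule imageE) simp
  have "a * b \<in> order_ideal (ideal_order I + ideal_order J) P"
    using assms(1) mult_in_ideal_mult[OF a(1) b(1)] by blast
  then show ?thesis using initial_form_mult[OF a(1) b(1)] a(2) b(2) by (simp add: order_ideal_def)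
qed

text \<open>A factor of order 0 would contain a unit: its degree-0 initial forms are coefficients, and
  the \<open>x2\<close>-free part \<open>x1\<^sup>d\<close> of a generator forces one of them to be 1.\<close>

lemma one_le_ideal_order:
  fixes M J :: "('v, 'a::idom) mpoly set"
  assumes J: "is_ideal J" "J \<noteq> UNIV" and e: "Var x1 ^ e \<in> J" "Var x2 ^ e \<in> J"
    and M: "form_module p M" "p + ideal_order J = d"
    and \<gamma>: "\<gamma> \<in> sum_prods M (initial_forms (ideal_order J) J)" "part (\<lambda>m. deg2 m = 0) \<gamma> = mon d 0"
  shows "1 \<le> ideal_order J"
proof (rule ccontr)
  assume "\<not> 1 \<le> ideal_order J"
  then have J0: "ideal_order J = 0" by simp
  have "1 \<in> J"
  proof (rule one_in_ideal_if_sum_prods_deg12_0[OF J(1) e _ _ \<gamma>(2)])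
    show "form_module d M" using M J0 by simp
    show "\<gamma> \<in> sum_prods M ((\<lambda>j. part (\<lambda>m. deg12 m = 0) j) ` J)"
      using \<gamma>(1) unfolding initial_forms_def J0 .
  qed
  then show False using ideal_eq_UNIV[OF J(1)] J(2) by simp
qed

text \<open>A proper factorization of the ideal generated by a set \<open>G\<close> of degree-\<open>d\<close> forms splits \<open>G\<close>
  into sums of products of initial forms of the two factors, of degrees \<open>p, q \<ge> 1\<close>; every
  condition \<open>P\<close> on degree-\<open>d\<close> forms that is linear over the coefficient ring and holds on \<open>G\<close>
  then holds on these products.\<close>

definition form_splitting :: "nat \<Rightarrow> (('v, 'a::comm_ring_1) mpoly \<Rightarrow> bool) \<Rightarrow> ('v, 'a) mpoly set \<Rightarrow>
    nat \<Rightarrow> nat \<Rightarrow> ('v, 'a) mpoly set \<Rightarrow> ('v, 'a) mpoly set \<Rightarrow> bool" where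
  "form_splitting d P G p q M N \<longleftrightarrow> 1 \<le> p \<and> 1 \<le> q \<and> p + q = d \<and>
     form_module p M \<and> form_module q N \<and> (\<forall>f\<in>M. \<forall>g\<in>N. P (f * g)) \<and> G \<subseteq> sum_prods M N"

lemma form_splitting_swap: "form_splitting d P G p q M N \<Longrightarrow> form_splitting d P G q p N M"
  unfolding form_splitting_def by (metis add.commute mult.commute subset_eq sum_prods_commute)

lemma form_splitting_if_ideal_mult:
  fixes G :: "('v, 'a::idom) mpoly set"
  assumes G: "\<And>\<gamma>. \<gamma> \<in> G \<Longrightarrow> homog d \<gamma> \<and> P \<gamma>" and P: "const12_closed P"
    and \<gamma>0: "\<gamma>0 \<in> G" "part (\<lambda>m. deg2 m = 0) \<gamma>0 = mon d 0"
    and e: "Var x1 ^ e \<in> ideal_gen G" "Var x2 ^ e \<in> ideal_gen G"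
    and I: "nz_ideal I" "I \<noteq> UNIV" and J: "nz_ideal J" "J \<noteq> UNIV"
    and A: "ideal_gen G = ideal_mult I J"
  shows "form_splitting d P G (ideal_order I) (ideal_order J)
    (initial_forms (ideal_order I) I) (initial_forms (ideal_order J) J)"
proof -
  have Ii: "is_ideal I" and Ji: "is_ideal J" using I J unfolding nz_ideal_def by auto
  define p q M N where "p = ideal_order I" and "q = ideal_order J"
    and "M = initial_forms (ideal_order I) I" and "N = initial_forms (ideal_order J) J"
  have MN: "form_module p M" "form_module q N"
    unfolding p_def q_def M_def N_def by (rule form_module_initial_forms[OF Ii], rule form_module_initial_forms[OF Ji])
  have A_P: "ideal_gen G \<subseteq> order_ideal d P"
    by (rule ideal_gen_least[OF is_ideal_order_ideal[OF P]]) (use G in \<open>blast intro: homog_in_order_ideal\<close>)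
  have A_MN: "ideal_gen G \<subseteq> order_ideal (p + q) (\<lambda>\<epsilon>. \<epsilon> \<in> sum_prods M N)"
    unfolding A p_def q_def M_def N_def by (rule ideal_mult_subset_order_ideal[OF Ii Ji])
  have pq: "p + q = d"
    unfolding p_def q_def using A_P A \<gamma>0(1) ideal_gen_subset G[OF \<gamma>0(1)] \<gamma>0(2) mon_neq_0
    by (intro ideal_order_add_eq[OF I(1) J(1)]) force+
  have "\<forall>f\<in>M. \<forall>g\<in>N. P (f * g)"
    using initial_forms_mult_in_order_ideal[of I J P] A_P pq unfolding A M_def N_def p_def q_def by blast
  moreover have G_MN: "G \<subseteq> sum_prods M N"
  proof
    fix \<gamma> assume \<gamma>: "\<gamma> \<in> G"
    then have "\<gamma> \<in> order_ideal d (\<lambda>\<epsilon>. \<epsilon> \<in> sum_prods M N)" using A_MN ideal_gen_subset pq by blast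
    then show "\<gamma> \<in> sum_prods M N" using G[OF \<gamma>] by (simp add: order_ideal_def homog_def part_eq_self)
  qed
  moreover have "1 \<le> q"
    unfolding q_def using e A ideal_mult_subset_right[OF Ji] G_MN \<gamma>0(1) pq
    by (intro one_le_ideal_order[OF Ji J(2) _ _ MN(1) _ _ \<gamma>0(2)]) (auto simp: N_def q_def)
  moreover have "1 \<le> p"
    unfolding p_def using e A ideal_mult_subset_left[OF Ii] sum_prods_commute[OF subsetD[OF G_MN \<gamma>0(1)]] pq
    by (intro one_le_ideal_order[OF Ii I(2) _ _ MN(2) _ _ \<gamma>0(2)]) (auto simp: M_def p_def)
  ultimately show ?thesis using pq MN unfolding form_splitting_def p_def q_def M_def N_def by blast
qed

lemma ideal_atom_if_no_form_splitting:
  fixes G :: "('v, 'a::idom) mpoly set"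
  assumes d: "1 \<le> d" and G: "\<And>\<gamma>. \<gamma> \<in> G \<Longrightarrow> homog d \<gamma> \<and> P \<gamma>" and P: "const12_closed P"
    and \<gamma>0: "\<gamma>0 \<in> G" "part (\<lambda>m. deg2 m = 0) \<gamma>0 = mon d 0"
    and e: "Var x1 ^ e \<in> ideal_gen G" "Var x2 ^ e \<in> ideal_gen G"
    and no_splitting: "\<And>p q M N. \<not> form_splitting d P G p q M N"
  shows "ideal_atom (ideal_gen G)"
  unfolding ideal_atom_def
proof (intro conjI allI impI)
  have "\<gamma>0 \<noteq> 0" using \<gamma>0(2) mon_neq_0 by force
  then show "nz_ideal (ideal_gen G)"
    unfolding nz_ideal_def using is_ideal_ideal_gen ideal_gen_subset \<gamma>0(1) by blast
  have "ideal_gen G \<subseteq> order_ideal d (\<lambda>_. True)"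
    by (rule ideal_gen_least[OF is_ideal_order_ideal]) (use G in \<open>auto simp: const12_closed_def homog_in_order_ideal\<close>)
  moreover have "1 \<notin> order_ideal d (\<lambda>_. True)" using d by (simp add: order_ideal_def)
  ultimately show "ideal_gen G \<noteq> UNIV" by blast
  fix I J assume "nz_ideal I" "nz_ideal J" "ideal_gen G = ideal_mult I J"
  then show "I = UNIV \<or> J = UNIV"
    using form_splitting_if_ideal_mult[OF G P \<gamma>0 e] no_splitting by blast
qed

section \<open>The \<open>x2\<close>-orders of initial forms\<close>

definition deg2_in :: "nat set \<Rightarrow> ('v, 'a::comm_ring_1) mpoly \<Rightarrow> bool" where
  "deg2_in E F \<longleftrightarrow> (\<forall>t. t \<notin> E \<longrightarrow> part (\<lambda>m. deg2 m = t) F = 0)"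

lemma deg2_in_low_deg:
  fixes f g :: "('v, 'a::idom) mpoly"
  assumes "deg2_in E (f * g)" "f \<noteq> 0" "g \<noteq> 0"
  shows "low_deg deg2 f + low_deg deg2 g \<in> E"
  using assms part_low_deg_mult_neq_0[OF additive_deg2 assms(2,3)] unfolding deg2_in_def by blast

lemma const12_closed_deg2_in: "const12_closed (deg2_in E)"
  unfolding const12_closed_def deg2_in_def by (simp add: part_add part_deg2_const12_mult)

lemma deg2_in_mon: "t \<in> E \<Longrightarrow> deg2_in E (mon a t)"
  unfolding deg2_in_def by (auto simp: part_deg2_mon)

lemma sum_prods_low_deg2_0:
  fixes M N :: "('v, 'a::idom) mpoly set"
  assumes "e \<in> sum_prods M N" "part (\<lambda>m. deg2 m = 0) e \<noteq> 0"
  obtains f where "f \<in> M" "f \<noteq> 0" "low_deg deg2 f = 0"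
proof (rule ccontr)
  assume no_f: "\<not> thesis"
  note found = that
  have "part (\<lambda>m. deg2 m = 0) (f * g) = 0" if f: "f \<in> M" for f g
  proof (rule part_eq_0)
    fix m assume m: "m \<in> keys (f * g)"
    then have "f \<noteq> 0" by auto
    then have "1 \<le> low_deg deg2 f" using no_f found f by (cases "low_deg deg2 f") auto
    then have "1 + 0 \<le> deg2 m"
      using low_deg_le[of _ f deg2] by (intro weight_in_keys_mult_ge[OF additive_deg2 m]) force+
    then show "deg2 m \<noteq> 0" by simp
  qed
  then have "part (\<lambda>m. deg2 m = 0) e = 0" using part_sum_prods_eq_0 assms(1) by blast
  then show False using assms(2) by simp
qed

text \<open>The lowest \<open>x2\<close>-parts of degree-\<open>p\<close> forms of \<open>x2\<close>-order \<open>t\<close> are coefficient multiples of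
  the single monomial \<open>x1\<^sup>p\<^sup>-\<^sup>t x2\<^sup>t\<close>, so they can be cancelled against each other.\<close>

lemma form_module_cancel_low_deg2:
  fixes M :: "('v, 'a::idom) mpoly set"
  assumes M: "form_module p M" and f: "f \<in> M" "f \<noteq> 0" "low_deg deg2 f = t"
  obtains \<kappa> where "const12 \<kappa>" "\<kappa> \<noteq> 0"
    "\<And>h. h \<in> M \<Longrightarrow> \<exists>a. const12 a \<and> \<kappa> * h - a * f \<in> M \<and> part (\<lambda>m. deg2 m = t) (\<kappa> * h - a * f) = 0"
proof -
  obtain \<kappa> where \<kappa>: "const12 \<kappa>" "part (\<lambda>m. deg2 m = t) f = \<kappa> * mon (p - t) t"
    by (rule part_deg2_eq_const12_mult_mon[OF form_module_homog[OF M f(1)]])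
  have "\<kappa> \<noteq> 0" using part_low_deg_neq_0[OF f(2), of deg2] \<kappa>(2) f(3) by auto
  moreover have "\<exists>a. const12 a \<and> \<kappa> * h - a * f \<in> M \<and> part (\<lambda>m. deg2 m = t) (\<kappa> * h - a * f) = 0"
    if h: "h \<in> M" for h
  proof -
    obtain a where a: "const12 a" "part (\<lambda>m. deg2 m = t) h = a * mon (p - t) t"
      by (rule part_deg2_eq_const12_mult_mon[OF form_module_homog[OF M h]])
    have "\<kappa> * h - a * f \<in> M"
      by (rule form_module_diff[OF M form_module_const12_mult[OF M \<kappa>(1) h] form_module_const12_mult[OF M a(1) f(1)]])
    moreover have "part (\<lambda>m. deg2 m = t) (\<kappa> * h - a * f) = 0"
      unfolding part_diff part_deg2_const12_mult[OF \<kappa>(1)] part_deg2_const12_mult[OF a(1)] a(2) \<kappa>(2)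
      by (simp add: algebra_simps)
    ultimately show ?thesis using a(1) by blast
  qed
  ultimately show ?thesis using that \<kappa>(1) by blast
qed

lemma form_module_rank_one:
  fixes M :: "('v, 'a::idom) mpoly set"
  assumes M: "form_module p M" and f0: "f0 \<in> M" "f0 \<noteq> 0"
    and same: "\<And>f. f \<in> M \<Longrightarrow> f \<noteq> 0 \<Longrightarrow> low_deg deg2 f = low_deg deg2 f0"
  obtains \<kappa> where "const12 \<kappa>" "\<kappa> \<noteq> 0" "\<And>f. f \<in> M \<Longrightarrow> \<exists>c. const12 c \<and> \<kappa> * f = c * f0"
proof -
  obtain \<kappa> where \<kappa>: "const12 \<kappa>" "\<kappa> \<noteq> 0" and cancel: "\<And>h. h \<in> M \<Longrightarrow>
      \<exists>a. const12 a \<and> \<kappa> * h - a * f0 \<in> M \<and> part (\<lambda>m. deg2 m = low_deg deg2 f0) (\<kappa> * h - a * f0) = 0"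
    using form_module_cancel_low_deg2[OF M f0 refl] by metis
  have "\<exists>c. const12 c \<and> \<kappa> * f = c * f0" if f: "f \<in> M" for f
  proof -
    obtain c where c: "const12 c" "\<kappa> * f - c * f0 \<in> M" "part (\<lambda>m. deg2 m = low_deg deg2 f0) (\<kappa> * f - c * f0) = 0"
      using cancel[OF f] by blast
    then have "\<kappa> * f - c * f0 = 0" using same part_low_deg_neq_0 by metis
    then show ?thesis using c(1) by auto
  qed
  then show ?thesis using that \<kappa> by blast
qed

lemma sum_prods_rank_one:
  fixes M N :: "('v, 'a::idom) mpoly set"
  assumes M: "form_module p M" and N: "form_module q N" and f0: "f0 \<in> M" "f0 \<noteq> 0"
    and same: "\<And>f. f \<in> M \<Longrightarrow> f \<noteq> 0 \<Longrightarrow> low_deg deg2 f = low_deg deg2 f0"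
  obtains \<kappa> where "const12 \<kappa>" "\<kappa> \<noteq> 0" "\<And>e. e \<in> sum_prods M N \<Longrightarrow> \<exists>n. homog q n \<and> \<kappa> * e = f0 * n"
proof -
  obtain \<kappa> where \<kappa>: "const12 \<kappa>" "\<kappa> \<noteq> 0" and M_f0: "\<And>f. f \<in> M \<Longrightarrow> \<exists>c. const12 c \<and> \<kappa> * f = c * f0"
    using form_module_rank_one[OF M f0 same] by metis
  have "\<exists>n. homog q n \<and> \<kappa> * e = f0 * n" if "e \<in> sum_prods M N" for e
    using that
  proof (induction e rule: sum_prods.induct)
    case zero then show ?case by (intro exI[of _ 0]) (simp add: homog_zero)
  next
    case (add_prod f g e)
    obtain n where n: "homog q n" "\<kappa> * e = f0 * n" using add_prod.IH by blast
    obtain c where c: "const12 c" "\<kappa> * f = c * f0" using M_f0[OF add_prod(1)] by blast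
    have "\<kappa> * (f * g + e) = (\<kappa> * f) * g + \<kappa> * e" by (simp add: algebra_simps)
    also have "\<dots> = f0 * (c * g + n)" by (simp add: c(2) n(2) algebra_simps)
    finally have "\<kappa> * (f * g + e) = f0 * (c * g + n)" .
    moreover have "homog q (c * g + n)"
      using homog_add[OF homog_const12_mult[OF c(1) form_module_homog[OF N add_prod(2)]] n(1)] .
    ultimately show ?case by blast
  qed
  then show ?thesis using that \<kappa> by blast
qed

lemma low_deg_const12_mult_eq:
  fixes \<kappa> e f0 n :: "('v, 'a::idom) mpoly"
  assumes "const12 \<kappa>" "\<kappa> \<noteq> 0" "e \<noteq> 0" "\<kappa> * e = f0 * n"
  shows "f0 \<noteq> 0" "n \<noteq> 0" "low_deg deg2 e = low_deg deg2 f0 + low_deg deg2 n" "low_deg deg1 e = low_deg deg1 f0 + low_deg deg1 n"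
proof -
  have ne: "\<kappa> * e \<noteq> 0" using mpoly_mult_neq_0 assms by blast
  show f0: "f0 \<noteq> 0" and n: "n \<noteq> 0" using ne assms(4) by auto
  show "low_deg deg2 e = low_deg deg2 f0 + low_deg deg2 n"
    using low_deg_const12_mult(1)[OF assms(1-3)] low_deg_mult[OF additive_deg2 f0 n] assms(4) by simp
  show "low_deg deg1 e = low_deg deg1 f0 + low_deg deg1 n"
    using low_deg_const12_mult(2)[OF assms(1-3)] low_deg_mult[OF additive_deg1 f0 n] assms(4) by simp
qed

lemma low_deg2_not_constant_pure_powers:
  fixes M N :: "('v, 'a::idom) mpoly set"
  assumes M: "form_module p M" and N: "form_module q N" and pq: "p + q = d" "1 \<le> p"
    and e1: "mon d 0 \<in> sum_prods M N" and e2: "mon 0 d \<in> sum_prods M N"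
    and f0: "f0 \<in> M" "f0 \<noteq> 0"
  shows "\<exists>f\<in>M. f \<noteq> 0 \<and> low_deg deg2 f \<noteq> low_deg deg2 f0"
proof (rule ccontr)
  assume "\<not> ?thesis"
  then have same: "\<And>f. f \<in> M \<Longrightarrow> f \<noteq> 0 \<Longrightarrow> low_deg deg2 f = low_deg deg2 f0" by auto
  obtain \<kappa> where \<kappa>: "const12 \<kappa>" "\<kappa> \<noteq> 0" "\<And>e. e \<in> sum_prods M N \<Longrightarrow> \<exists>n. homog q n \<and> \<kappa> * e = f0 * n"
    using sum_prods_rank_one[OF M N f0 same] by metis
  obtain n1 where n1: "homog q n1" "\<kappa> * mon d 0 = f0 * n1" using \<kappa>(3)[OF e1] by blast
  obtain n2 where n2: "homog q n2" "\<kappa> * mon 0 d = f0 * n2" using \<kappa>(3)[OF e2] by blast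
  note a = low_deg_const12_mult_eq[OF \<kappa>(1,2) mon_neq_0 n1(2)]
  note b = low_deg_const12_mult_eq[OF \<kappa>(1,2) mon_neq_0 n2(2)]
  have "low_deg deg2 f0 = 0" using a(3) by (simp add: low_deg2_mon)
  moreover have "low_deg deg2 n2 \<le> q" using homog_low_deg_le(1)[OF n2(1) b(2)] .
  ultimately show False using b(3) pq by (simp add: low_deg2_mon)
qed

lemma mon30_add_mon03:
  shows "low_deg deg2 (mon 3 0 + mon 0 3 :: ('v, 'a::idom) mpoly) = 0"
    "low_deg deg1 (mon 3 0 + mon 0 3 :: ('v, 'a::idom) mpoly) = 0"
    "(mon 3 0 + mon 0 3 :: ('v, 'a::idom) mpoly) \<noteq> 0"
proof -
  show "low_deg deg2 (mon 3 0 + mon 0 3 :: ('v, 'a::idom) mpoly) = 0"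
    by (rule low_deg_eqI) (simp_all add: part_add part_deg2_mon mon_neq_0)
  show "low_deg deg1 (mon 3 0 + mon 0 3 :: ('v, 'a::idom) mpoly) = 0"
    by (rule low_deg_eqI) (simp_all add: part_add part_deg1_mon mon_neq_0)
  have "part (\<lambda>m. deg2 m = 0) (mon 3 0 + mon 0 3 :: ('v, 'a::idom) mpoly) = mon 3 0"
    by (simp add: part_add part_deg2_mon)
  then show "(mon 3 0 + mon 0 3 :: ('v, 'a::idom) mpoly) \<noteq> 0" using mon_neq_0 by force
qed

lemma low_deg2_not_constant_c':
  fixes M N :: "('v, 'a::idom) mpoly set"
  assumes M: "form_module p M" and N: "form_module q N" and pq: "p + q = 3" "1 \<le> p"
    and e1: "mon 2 1 \<in> sum_prods M N" and e2: "mon 3 0 + mon 0 3 \<in> sum_prods M N"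
    and f0: "f0 \<in> M" "f0 \<noteq> 0"
  shows "\<exists>f\<in>M. f \<noteq> 0 \<and> low_deg deg2 f \<noteq> low_deg deg2 f0"
proof (rule ccontr)
  assume "\<not> ?thesis"
  then have same: "\<And>f. f \<in> M \<Longrightarrow> f \<noteq> 0 \<Longrightarrow> low_deg deg2 f = low_deg deg2 f0" by auto
  obtain \<kappa> where \<kappa>: "const12 \<kappa>" "\<kappa> \<noteq> 0" "\<And>e. e \<in> sum_prods M N \<Longrightarrow> \<exists>n. homog q n \<and> \<kappa> * e = f0 * n"
    using sum_prods_rank_one[OF M N f0 same] by metis
  obtain n1 where n1: "homog q n1" "\<kappa> * mon 2 1 = f0 * n1" using \<kappa>(3)[OF e1] by blast
  obtain n2 where n2: "homog q n2" "\<kappa> * (mon 3 0 + mon 0 3) = f0 * n2" using \<kappa>(3)[OF e2] by blast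
  note a = low_deg_const12_mult_eq[OF \<kappa>(1,2) mon_neq_0 n1(2)]
  note b = low_deg_const12_mult_eq[OF \<kappa>(1,2) mon30_add_mon03(3) n2(2)]
  have x1: "low_deg deg1 f0 + low_deg deg2 f0 \<le> p" using homog_low_deg_le(2)[OF form_module_homog[OF M f0(1)] f0(2)] .
  have x2: "low_deg deg1 n1 + low_deg deg2 n1 \<le> q" using homog_low_deg_le(2)[OF n1(1) a(2)] .
  have "low_deg deg2 f0 + low_deg deg2 n1 = 1" "low_deg deg1 f0 + low_deg deg1 n1 = 2"
    using a(3,4) by (simp_all add: low_deg2_mon low_deg1_mon)
  then have "low_deg deg1 f0 + low_deg deg2 f0 = p" using x1 x2 pq by linarith
  moreover have "low_deg deg1 f0 + low_deg deg1 n2 = 0" using trans[OF b(4)[symmetric] mon30_add_mon03(2)] .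
  moreover have "low_deg deg2 f0 + low_deg deg2 n2 = 0" using trans[OF b(3)[symmetric] mon30_add_mon03(1)] .
  ultimately show False using pq by simp
qed



fun const12_span :: "('v, 'a::comm_ring_1) mpoly list \<Rightarrow> ('v, 'a) mpoly set" where
  "const12_span [] = {0}"
| "const12_span (P # Ps) = {s * P + e | s e. const12 s \<and> e \<in> const12_span Ps}"

lemma const12_span_ConsI: "const12 s \<Longrightarrow> e \<in> const12_span Ps \<Longrightarrow> s * P + e \<in> const12_span (P # Ps)"
  by auto

lemma const12_span_zero: "0 \<in> const12_span Ps"
proof (induction Ps)
  case (Cons P Ps)
  then show ?case using const12_span_ConsI[OF const12_zero Cons, of P] by simp
qed simp

lemma const12_span_add: "e \<in> const12_span Ps \<Longrightarrow> e' \<in> const12_span Ps \<Longrightarrow> e + e' \<in> const12_span Ps"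
proof (induction Ps arbitrary: e e')
  case Nil then show ?case by simp
next
  case (Cons P Ps)
  obtain s e1 where a: "const12 s" "e1 \<in> const12_span Ps" "e = s * P + e1" using Cons.prems(1) by auto
  obtain s' e1' where b: "const12 s'" "e1' \<in> const12_span Ps" "e' = s' * P + e1'" using Cons.prems(2) by auto
  have "e + e' = (s + s') * P + (e1 + e1')" using a(3) b(3) by (simp add: algebra_simps)
  then show ?case using const12_span_ConsI[OF const12_add[OF a(1) b(1)] Cons.IH[OF a(2) b(2)]] by simp
qed

lemma const12_span_const12_mult: "const12 c \<Longrightarrow> e \<in> const12_span Ps \<Longrightarrow> c * e \<in> const12_span Ps"
proof (induction Ps arbitrary: e)
  case Nil then show ?case by simp
next
  case (Cons P Ps)
  obtain s e1 where a: "const12 s" "e1 \<in> const12_span Ps" "e = s * P + e1" using Cons.prems(2) by auto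
  have "c * e = (c * s) * P + c * e1" using a(3) by (simp add: algebra_simps)
  then show ?case using const12_span_ConsI[OF const12_mult[OF Cons.prems(1) a(1)] Cons.IH[OF Cons.prems(1) a(2)]] by simp
qed

lemma const12_minus_one: "const12 (- 1)"
  unfolding const12_def by simp

lemma const12_span_diff: "e \<in> const12_span Ps \<Longrightarrow> e' \<in> const12_span Ps \<Longrightarrow> e - e' \<in> const12_span Ps"
  using const12_span_add[of e Ps "(- 1) * e'"] const12_span_const12_mult[OF const12_minus_one, of e' Ps] by simp

lemma const12_mult_sum_prods_in_span:
  assumes "\<And>f g. f \<in> M \<Longrightarrow> g \<in> N \<Longrightarrow> \<kappa> * (f * g) \<in> const12_span Ps" "e \<in> sum_prods M N"
  shows "\<kappa> * e \<in> const12_span Ps"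
  using assms(2)
proof (induction e rule: sum_prods.induct)
  case (add_prod f g e)
  then show ?case using const12_span_add[OF assms(1)[OF add_prod(1,2)] add_prod.IH] by (simp add: distrib_left)
qed (simp add: const12_span_zero)

lemma low_deg2_const12_span_Cons:
  fixes P :: "('v, 'a::idom) mpoly"
  assumes u1: "u1 \<in> const12_span (P # Ps)" "u1 \<noteq> 0" "low_deg deg2 u1 = t1"
    and u2: "u2 \<in> const12_span (P # Ps)" "u2 \<noteq> 0" "low_deg deg2 u2 = t2"
    and lt: "t1 < t2"
    and n1: "\<not> (\<exists>u\<in>const12_span Ps. u \<noteq> 0 \<and> low_deg deg2 u = t1)"
    and n2: "\<not> (\<exists>u\<in>const12_span Ps. u \<noteq> 0 \<and> low_deg deg2 u = t2)"
  shows False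
proof -
  obtain s1 e1 where a: "const12 s1" "e1 \<in> const12_span Ps" "u1 = s1 * P + e1" using u1(1) by auto
  obtain s2 e2 where b: "const12 s2" "e2 \<in> const12_span Ps" "u2 = s2 * P + e2" using u2(1) by auto
  have s1: "s1 \<noteq> 0" using a n1 u1 by auto
  have s2: "s2 \<noteq> 0" using b n2 u2 by auto
  define w where "w = s2 * e1 - s1 * e2"
  have wsp: "w \<in> const12_span Ps" unfolding w_def by (intro const12_span_diff const12_span_const12_mult a b)
  have weq: "w = s2 * u1 - s1 * u2" unfolding w_def a(3) b(3) by (simp add: algebra_simps)
  have r2: "part (\<lambda>m. deg2 m = t1) u2 = 0" by (rule part_below_low_deg) (use lt u2(3) in simp)
  have r1: "part (\<lambda>m. deg2 m = t1) u1 \<noteq> 0" using part_low_deg_neq_0[OF u1(2), of deg2] u1(3) by simp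
  have rw: "part (\<lambda>m. deg2 m = t1) w = s2 * part (\<lambda>m. deg2 m = t1) u1"
    unfolding weq part_diff part_deg2_const12_mult[OF b(1)] part_deg2_const12_mult[OF a(1)] r2 by simp
  have rwne: "part (\<lambda>m. deg2 m = t1) w \<noteq> 0" unfolding rw using mpoly_mult_neq_0[OF s2 r1] .
  have kw: "t1 \<le> deg2 m" if "m \<in> keys w" for m
  proof -
    have "m \<in> keys (s2 * u1) \<or> m \<in> keys (s1 * u2)" using that unfolding weq by (rule in_keys_diffD)
    then show ?thesis
    proof
      assume "m \<in> keys (s2 * u1)"
      then show ?thesis by (rule deg2_in_keys_const12_mult_ge[OF b(1)]) (use low_deg_le[of _ u1 deg2] u1(3) in auto)
    next
      assume "m \<in> keys (s1 * u2)"
      then have "t2 \<le> deg2 m" by (rule deg2_in_keys_const12_mult_ge[OF a(1)]) (use low_deg_le[of _ u2 deg2] u2(3) in auto)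
      then show ?thesis using lt by simp
    qed
  qed
  have "low_deg deg2 w = t1" by (rule low_deg_eqI[OF kw rwne])
  moreover have "w \<noteq> 0" using rwne by auto
  ultimately show False using n1 wsp by blast
qed

lemma card_low_deg2_const12_span_le:
  fixes Ps :: "('v, 'a::idom) mpoly list"
  shows "finite T \<Longrightarrow> (\<forall>t\<in>T. \<exists>u\<in>const12_span Ps. u \<noteq> 0 \<and> low_deg deg2 u = t) \<Longrightarrow> card T \<le> length Ps"
proof (induction Ps arbitrary: T)
  case Nil
  then have "T = {}" by auto
  then show ?case by simp
next
  case (Cons P Ps)
  define T' where "T' = {t \<in> T. \<exists>u\<in>const12_span Ps. u \<noteq> 0 \<and> low_deg deg2 u = t}"
  have fT': "finite T'" using Cons.prems(1) unfolding T'_def by simp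
  have c1: "card T' \<le> length Ps" by (rule Cons.IH[OF fT']) (auto simp: T'_def)
  have one: "\<forall>a1\<in>T - T'. \<forall>a2\<in>T - T'. a1 = a2"
  proof (intro ballI)
    fix a1 a2 assume h1: "a1 \<in> T - T'" and h2: "a2 \<in> T - T'"
    obtain u1 where u1: "u1 \<in> const12_span (P # Ps)" "u1 \<noteq> 0" "low_deg deg2 u1 = a1" using h1 Cons.prems(2) by blast
    obtain u2 where u2: "u2 \<in> const12_span (P # Ps)" "u2 \<noteq> 0" "low_deg deg2 u2 = a2" using h2 Cons.prems(2) by blast
    have n1: "\<not> (\<exists>u\<in>const12_span Ps. u \<noteq> 0 \<and> low_deg deg2 u = a1)" using h1 unfolding T'_def by blast
    have n2: "\<not> (\<exists>u\<in>const12_span Ps. u \<noteq> 0 \<and> low_deg deg2 u = a2)" using h2 unfolding T'_def by blast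
    show "a1 = a2"
    proof (rule linorder_cases[of a1 a2])
      assume "a1 < a2" then show ?thesis using low_deg2_const12_span_Cons[OF u1 u2 _ n1 n2] by blast
    next
      assume "a2 < a1" then show ?thesis using low_deg2_const12_span_Cons[OF u2 u1 _ n2 n1] by blast
    qed
  qed
  have c2: "card (T - T') \<le> 1"
    using card_le_Suc0_iff_eq[of "T - T'"] Cons.prems(1) one by simp
  have "T = T' \<union> (T - T')" unfolding T'_def by blast
  then have "card T \<le> card T' + card (T - T')" by (metis card_Un_le)
  then show ?case using c1 c2 by simp
qed

lemma form_module_rank_two:
  fixes M :: "('v, 'a::idom) mpoly set"
  assumes M: "form_module p M" and f0: "f0 \<in> M" "f0 \<noteq> 0" "low_deg deg2 f0 = 0"
    and f1: "f1 \<in> M" "f1 \<noteq> 0" "low_deg deg2 f1 = 1"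
    and le1: "\<And>f. f \<in> M \<Longrightarrow> f \<noteq> 0 \<Longrightarrow> low_deg deg2 f \<le> 1"
  obtains \<kappa> where "const12 \<kappa>" "\<kappa> \<noteq> 0"
    "\<And>f. f \<in> M \<Longrightarrow> \<exists>a b. const12 a \<and> const12 b \<and> \<kappa> * f = a * f0 + b * f1"
proof -
  obtain \<alpha> where \<alpha>: "const12 \<alpha>" "\<alpha> \<noteq> 0" and cancel0: "\<And>h. h \<in> M \<Longrightarrow>
      \<exists>a. const12 a \<and> \<alpha> * h - a * f0 \<in> M \<and> part (\<lambda>m. deg2 m = 0) (\<alpha> * h - a * f0) = 0"
    using form_module_cancel_low_deg2[OF M f0] by metis
  obtain \<beta> where \<beta>: "const12 \<beta>" "\<beta> \<noteq> 0" and cancel1: "\<And>h. h \<in> M \<Longrightarrow>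
      \<exists>b. const12 b \<and> \<beta> * h - b * f1 \<in> M \<and> part (\<lambda>m. deg2 m = 1) (\<beta> * h - b * f1) = 0"
    using form_module_cancel_low_deg2[OF M f1] by metis
  have f1_0: "part (\<lambda>m. deg2 m = 0) f1 = 0" by (rule part_below_low_deg) (simp add: f1(3))
  have "\<exists>a b. const12 a \<and> const12 b \<and> (\<beta> * \<alpha>) * f = a * f0 + b * f1" if f: "f \<in> M" for f
  proof -
    obtain a where a: "const12 a" "\<alpha> * f - a * f0 \<in> M" "part (\<lambda>m. deg2 m = 0) (\<alpha> * f - a * f0) = 0"
      using cancel0[OF f] by blast
    obtain b where b: "const12 b" "\<beta> * (\<alpha> * f - a * f0) - b * f1 \<in> M"
      "part (\<lambda>m. deg2 m = 1) (\<beta> * (\<alpha> * f - a * f0) - b * f1) = 0"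
      using cancel1[OF a(2)] by blast
    let ?h = "\<beta> * (\<alpha> * f - a * f0) - b * f1"
    have "part (\<lambda>m. deg2 m = 0) ?h = \<beta> * part (\<lambda>m. deg2 m = 0) (\<alpha> * f - a * f0) - b * part (\<lambda>m. deg2 m = 0) f1"
      by (simp only: part_diff[of _ "\<beta> * _"] part_deg2_const12_mult[OF \<beta>(1)] part_deg2_const12_mult[OF b(1)])
    then have "part (\<lambda>m. deg2 m = 0) ?h = 0" by (simp add: a(3) f1_0)
    then have "?h = 0"
      using b(3) le1[OF b(2)] part_low_deg_neq_0[of ?h deg2] by (cases "low_deg deg2 ?h") auto
    then have "(\<beta> * \<alpha>) * f = (\<beta> * a) * f0 + b * f1" by (simp add: algebra_simps)
    then show ?thesis using const12_mult[OF \<beta>(1) a(1)] b(1) by blast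
  qed
  then show ?thesis using that const12_mult[OF \<beta>(1) \<alpha>(1)] mpoly_mult_neq_0[OF \<beta>(2) \<alpha>(2)] by blast
qed

lemma mult_in_const12_span_products:
  assumes "const12 a" "const12 b" "const12 a'" "const12 b'"
  shows "(a * f0 + b * f1) * (a' * g0 + b' * g1) \<in> const12_span [f0 * g0, f0 * g1, f1 * g0, f1 * g1]"
proof -
  have "(a * f0 + b * f1) * (a' * g0 + b' * g1) =
      (a * a') * (f0 * g0) + ((a * b') * (f0 * g1) + ((b * a') * (f1 * g0) + ((b * b') * (f1 * g1) + 0)))"
    by (simp add: algebra_simps)
  then show ?thesis by (simp only:) (intro const12_span_ConsI const12_mult assms const12_span_zero)
qed

text \<open>The five generators \<open>x1\<^sup>d\<^sup>-\<^sup>t x2\<^sup>t\<close>, \<open>t \<in> {0, 1, 2, 4, 6}\<close>, have distinct \<open>x2\<close>-orders, but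
  up to a common coefficient they lie in the span of the four products \<open>f\<^sub>i g\<^sub>j\<close>.\<close>

lemma no_even_family_low_deg2_le1:
  fixes M N :: "('v, 'a::idom) mpoly set"
  assumes M: "form_module p M" and f0: "f0 \<in> M" "f0 \<noteq> 0" "low_deg deg2 f0 = 0"
    and f1: "f1 \<in> M" "f1 \<noteq> 0" "low_deg deg2 f1 = 1"
    and le1: "\<And>f. f \<in> M \<Longrightarrow> f \<noteq> 0 \<Longrightarrow> low_deg deg2 f \<le> 1"
    and N: "form_module q N" and g0: "g0 \<in> N" "g0 \<noteq> 0" "low_deg deg2 g0 = 0"
    and g1: "g1 \<in> N" "g1 \<noteq> 0" "low_deg deg2 g1 = 1"
    and le1': "\<And>g. g \<in> N \<Longrightarrow> g \<noteq> 0 \<Longrightarrow> low_deg deg2 g \<le> 1"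
    and gens: "\<And>t. t \<in> {0, 1, 2, 4, 6} \<Longrightarrow> mon (d - t) t \<in> sum_prods M N"
  shows False
proof -
  obtain \<kappa>1 where k1: "const12 \<kappa>1" "\<kappa>1 \<noteq> 0" "\<And>f. f \<in> M \<Longrightarrow> \<exists>a b. const12 a \<and> const12 b \<and> \<kappa>1 * f = a * f0 + b * f1"
    using form_module_rank_two[OF M f0 f1 le1] by metis
  obtain \<kappa>2 where k2: "const12 \<kappa>2" "\<kappa>2 \<noteq> 0" "\<And>g. g \<in> N \<Longrightarrow> \<exists>a b. const12 a \<and> const12 b \<and> \<kappa>2 * g = a * g0 + b * g1"
    using form_module_rank_two[OF N g0 g1 le1'] by metis
  define \<kappa> where "\<kappa> = \<kappa>1 * \<kappa>2"
  have kW: "const12 \<kappa>" unfolding \<kappa>_def by (rule const12_mult[OF k1(1) k2(1)])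
  have k0: "\<kappa> \<noteq> 0" unfolding \<kappa>_def using mpoly_mult_neq_0[OF k1(2) k2(2)] .
  define Ps where "Ps = [f0 * g0, f0 * g1, f1 * g0, f1 * g1]"
  have prodin: "\<kappa> * (f * g) \<in> const12_span Ps" if f: "f \<in> M" and g: "g \<in> N" for f g
  proof -
    obtain a b where ab: "const12 a" "const12 b" "\<kappa>1 * f = a * f0 + b * f1" using k1(3)[OF f] by blast
    obtain a' b' where ab': "const12 a'" "const12 b'" "\<kappa>2 * g = a' * g0 + b' * g1" using k2(3)[OF g] by blast
    have "\<kappa> * (f * g) = (\<kappa>1 * f) * (\<kappa>2 * g)" unfolding \<kappa>_def by (simp add: algebra_simps)
    then show ?thesis unfolding Ps_def ab(3) ab'(3) using mult_in_const12_span_products[OF ab(1,2) ab'(1,2)]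
      by (simp only:)
  qed
  have "card {0, 1, 2, 4, 6 :: nat} \<le> length Ps"
  proof (rule card_low_deg2_const12_span_le)
    show "finite {0, 1, 2, 4, 6 :: nat}" by simp
    show "\<forall>t\<in>{0, 1, 2, 4, 6}. \<exists>u\<in>const12_span Ps. u \<noteq> 0 \<and> low_deg deg2 u = t"
    proof
      fix t :: nat assume t: "t \<in> {0, 1, 2, 4, 6}"
      have "\<kappa> * mon (d - t) t \<in> const12_span Ps" by (rule const12_mult_sum_prods_in_span[OF prodin gens[OF t]])
      moreover have "\<kappa> * mon (d - t) t \<noteq> 0" using mpoly_mult_neq_0[OF k0 mon_neq_0] .
      moreover have "low_deg deg2 (\<kappa> * mon (d - t) t) = t" using low_deg_const12_mult(1)[OF kW k0 mon_neq_0] low_deg2_mon by simp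
      ultimately show "\<exists>u\<in>const12_span Ps. u \<noteq> 0 \<and> low_deg deg2 u = t" by blast
    qed
  qed
  then show False unfolding Ps_def by simp
qed

text \<open>Without elements of \<open>x2\<close>-order 1 the \<open>x2\<close>-linear part of every product vanishes: for factors of
  \<open>x2\<close>-order 0 by polarization against factors of even \<open>x2\<close>-order \<open>\<ge> 2\<close>, whose products have no
  odd \<open>x2\<close>-exponents \<open>\<ge> 3\<close>.\<close>

lemma part_deg2_1_mult_eq_0_without_low_deg2_1:
  fixes M N :: "('v, 'a::idom) mpoly set"
  assumes good: "\<And>f g. f \<in> M \<Longrightarrow> g \<in> N \<Longrightarrow> deg2_in E (f * g)"
    and E: "\<And>t. t \<in> E \<Longrightarrow> t = 0 \<or> t = 1 \<or> even t"
    and no1: "\<And>f. f \<in> M \<Longrightarrow> f \<noteq> 0 \<Longrightarrow> low_deg deg2 f \<noteq> 1"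
    and no1': "\<And>g. g \<in> N \<Longrightarrow> g \<noteq> 0 \<Longrightarrow> low_deg deg2 g \<noteq> 1"
    and f': "f' \<in> M" "f' \<noteq> 0" "even (low_deg deg2 f')" "2 \<le> low_deg deg2 f'"
    and g': "g' \<in> N" "g' \<noteq> 0" "even (low_deg deg2 g')" "2 \<le> low_deg deg2 g'"
    and f: "f \<in> M" and g: "g \<in> N"
  shows "part (\<lambda>m. deg2 m = 1) (f * g) = 0"
proof -
  have odd_part_eq_0: "part (\<lambda>m. deg2 m = t) (f * g) = 0" if "f \<in> M" "g \<in> N" "odd t" "3 \<le> t" for f g t
  proof -
    have "t \<notin> E" using E[of t] that(3,4) by auto
    then show ?thesis using good[OF that(1,2)] unfolding deg2_in_def by blast
  qed
  show ?thesis
  proof (cases "f = 0 \<or> g = 0")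
    case False
    then have "f \<noteq> 0" "g \<noteq> 0" by auto
    show ?thesis
    proof (cases "low_deg deg2 f = 0 \<and> low_deg deg2 g = 0")
      case True
      have "part (\<lambda>m. deg2 m = 0 + 0 + 1) (f * g) = 0"
      proof (rule part_mult_Suc_eq_0_by_polarization[OF additive_deg2 _ _ f'(2) g'(2)])
        show "part (\<lambda>m. deg2 m = 0 + low_deg deg2 g' + 1) (f * g') = 0"
          using g'(3,4) by (intro odd_part_eq_0 f g'(1)) auto
        show "part (\<lambda>m. deg2 m = low_deg deg2 f' + 0 + 1) (f' * g) = 0"
          using f'(3,4) by (intro odd_part_eq_0 f'(1) g) auto
        show "part (\<lambda>m. deg2 m = low_deg deg2 f' + low_deg deg2 g' + 1) (f' * g') = 0"
          using f'(3,4) g'(3,4) by (intro odd_part_eq_0 f'(1) g'(1)) auto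
      qed auto
      then show ?thesis by simp
    next
      case False
      then have "1 < low_deg deg2 (f * g)"
        using no1[OF f] no1'[OF g] \<open>f \<noteq> 0\<close> \<open>g \<noteq> 0\<close> low_deg_mult[OF additive_deg2 \<open>f \<noteq> 0\<close> \<open>g \<noteq> 0\<close>]
        by auto
      then show ?thesis by (rule part_below_low_deg)
    qed
  qed auto
qed

section \<open>No splitting of the generating forms\<close>

lemma form_splittingD:
  assumes "form_splitting d P G p q M N"
  shows "form_module p M" "form_module q N" "p + q = d" "1 \<le> p" "1 \<le> q"
    "\<And>f g. f \<in> M \<Longrightarrow> g \<in> N \<Longrightarrow> P (f * g)" "\<And>\<gamma>. \<gamma> \<in> G \<Longrightarrow> \<gamma> \<in> sum_prods M N"
  using assms unfolding form_splitting_def by blast+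

lemma form_splitting_orders_pure_powers:
  fixes G :: "('v, 'a::idom) mpoly set"
  assumes S: "form_splitting d P G p q M N" and G: "mon d 0 \<in> G" "mon 0 d \<in> G"
  obtains f0 f where "f0 \<in> M" "f0 \<noteq> 0" "low_deg deg2 f0 = 0" "f \<in> M" "f \<noteq> 0" "low_deg deg2 f \<noteq> 0"
proof -
  note S = form_splittingD[OF S]
  have e: "mon d 0 \<in> sum_prods M N" "mon 0 d \<in> sum_prods M N" using S(7) G by blast+
  obtain f0 where f0: "f0 \<in> M" "f0 \<noteq> 0" "low_deg deg2 f0 = 0"
    by (rule sum_prods_low_deg2_0[OF e(1)]) (simp add: part_deg2_mon mon_neq_0)
  moreover obtain f where "f \<in> M" "f \<noteq> 0" "low_deg deg2 f \<noteq> low_deg deg2 f0"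
    using low_deg2_not_constant_pure_powers[OF S(1,2,3,4) e f0(1,2)] by blast
  ultimately show ?thesis using that by simp
qed

lemma no_form_splitting_pure_powers:
  fixes G :: "('v, 'a::idom) mpoly set"
  assumes G: "mon d 0 \<in> G" "mon 0 d \<in> G"
  shows "\<not> form_splitting d (deg2_in {0, d}) G p q M N"
proof
  assume S: "form_splitting d (deg2_in {0, d}) G p q M N"
  obtain f where f: "f \<in> M" "f \<noteq> 0" "low_deg deg2 f \<noteq> 0"
    by (rule form_splitting_orders_pure_powers[OF S G])
  obtain g0 where g0: "g0 \<in> N" "g0 \<noteq> 0" "low_deg deg2 g0 = 0"
    by (rule form_splitting_orders_pure_powers[OF form_splitting_swap[OF S] G])
  note S = form_splittingD[OF S]
  have "low_deg deg2 f + low_deg deg2 g0 \<in> {0, d}" using deg2_in_low_deg S(6) f g0 by blast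
  moreover have "low_deg deg2 f \<le> p" using homog_low_deg_le(1)[OF form_module_homog[OF S(1) f(1)] f(2)] .
  ultimately show False using f(3) g0(3) S(3,5) by auto
qed

lemma no_form_splitting_odd:
  fixes G :: "('v, 'a::idom) mpoly set"
  assumes E: "\<And>t. t \<in> E \<Longrightarrow> t = 0 \<or> odd t" and G: "mon d 0 \<in> G" "mon 0 d \<in> G"
  shows "\<not> form_splitting d (deg2_in E) G p q M N"
proof
  assume S: "form_splitting d (deg2_in E) G p q M N"
  obtain f0 f where f0: "f0 \<in> M" "f0 \<noteq> 0" "low_deg deg2 f0 = 0" and f: "f \<in> M" "f \<noteq> 0" "low_deg deg2 f \<noteq> 0"
    by (rule form_splitting_orders_pure_powers[OF S G])
  obtain g0 g where g0: "g0 \<in> N" "g0 \<noteq> 0" "low_deg deg2 g0 = 0" and g: "g \<in> N" "g \<noteq> 0" "low_deg deg2 g \<noteq> 0"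
    by (rule form_splitting_orders_pure_powers[OF form_splitting_swap[OF S] G])
  note good = form_splittingD(6)[OF S]
  have "odd (low_deg deg2 f)" using E[OF deg2_in_low_deg[OF good[OF f(1) g0(1)] f(2) g0(2)]] f(3) g0(3) by simp
  moreover have "odd (low_deg deg2 g)" using E[OF deg2_in_low_deg[OF good[OF f0(1) g(1)] f0(2) g(2)]] g(3) f0(3) by simp
  moreover have "low_deg deg2 f + low_deg deg2 g = 0 \<or> odd (low_deg deg2 f + low_deg deg2 g)"
    using E[OF deg2_in_low_deg[OF good[OF f(1) g(1)] f(2) g(2)]] .
  ultimately show False using f(3) by auto
qed

lemma low_deg2_le1_if_orders_01:
  fixes M N :: "('v, 'a::idom) mpoly set"
  assumes good: "\<And>f g. f \<in> M \<Longrightarrow> g \<in> N \<Longrightarrow> deg2_in E (f * g)"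
    and E: "\<And>t. t \<in> E \<Longrightarrow> t = 0 \<or> t = 1 \<or> even t"
    and f0: "f0 \<in> M" "f0 \<noteq> 0" "low_deg deg2 f0 = 0" and f1: "f1 \<in> M" "f1 \<noteq> 0" "low_deg deg2 f1 = 1"
    and g: "g \<in> N" "g \<noteq> 0"
  shows "low_deg deg2 g \<le> 1"
proof (rule ccontr)
  assume "\<not> low_deg deg2 g \<le> 1"
  moreover have "low_deg deg2 g = 0 \<or> low_deg deg2 g = 1 \<or> even (low_deg deg2 g)"
    using E[OF deg2_in_low_deg[OF good[OF f0(1) g(1)] f0(2) g(2)]] f0(3) by simp
  moreover have "1 + low_deg deg2 g = 0 \<or> 1 + low_deg deg2 g = 1 \<or> even (1 + low_deg deg2 g)"
    using E[OF deg2_in_low_deg[OF good[OF f1(1) g(1)] f1(2) g(2)]] f1(3) by simp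
  ultimately show False by auto
qed

lemma even_form_splitting_with_low_deg2_1:
  fixes G :: "('v, 'a::idom) mpoly set"
  assumes S: "form_splitting d (deg2_in E) G p q M N"
    and E: "\<And>t. t \<in> E \<Longrightarrow> t = 0 \<or> t = 1 \<or> even t"
    and G: "\<And>t. t \<in> {0, 1, 2, 4, 6} \<Longrightarrow> mon (d - t) t \<in> G" "mon 0 d \<in> G"
    and f1: "f1 \<in> M" "f1 \<noteq> 0" "low_deg deg2 f1 = 1"
  shows False
proof -
  have G0: "mon d 0 \<in> G" using G(1)[of 0] by simp
  obtain f0 where f0: "f0 \<in> M" "f0 \<noteq> 0" "low_deg deg2 f0 = 0"
    by (rule form_splitting_orders_pure_powers[OF S G0 G(2)])
  obtain g0 g where g0: "g0 \<in> N" "g0 \<noteq> 0" "low_deg deg2 g0 = 0" and g: "g \<in> N" "g \<noteq> 0" "low_deg deg2 g \<noteq> 0"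
    by (rule form_splitting_orders_pure_powers[OF form_splitting_swap[OF S] G0 G(2)])
  note good = form_splittingD(6)[OF S] and good' = form_splittingD(6)[OF form_splitting_swap[OF S]]
  have le1_N: "\<And>h. h \<in> N \<Longrightarrow> h \<noteq> 0 \<Longrightarrow> low_deg deg2 h \<le> 1"
    by (rule low_deg2_le1_if_orders_01[OF good E f0 f1])
  then have g1: "low_deg deg2 g = 1" using g by fastforce
  have le1_M: "\<And>h. h \<in> M \<Longrightarrow> h \<noteq> 0 \<Longrightarrow> low_deg deg2 h \<le> 1"
    by (rule low_deg2_le1_if_orders_01[OF good' E g0 g(1,2) g1])
  have gens: "\<And>t. t \<in> {0, 1, 2, 4, 6} \<Longrightarrow> mon (d - t) t \<in> sum_prods M N"
    using G(1) form_splittingD(7)[OF S] by blast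
  show False
    by (rule no_even_family_low_deg2_le1[OF form_splittingD(1)[OF S] f0 f1 le1_M form_splittingD(2)[OF S]
          g0 g(1,2) g1 le1_N gens])
qed

lemma no_form_splitting_even:
  fixes G :: "('v, 'a::idom) mpoly set"
  assumes E: "\<And>t. t \<in> E \<Longrightarrow> t = 0 \<or> t = 1 \<or> even t"
    and G: "\<And>t. t \<in> {0, 1, 2, 4, 6} \<Longrightarrow> mon (d - t) t \<in> G" "mon 0 d \<in> G"
  shows "\<not> form_splitting d (deg2_in E) G p q M N"
proof
  assume S: "form_splitting d (deg2_in E) G p q M N"
  consider (M1) f1 where "f1 \<in> M" "f1 \<noteq> 0" "low_deg deg2 f1 = 1"
    | (N1) g1 where "g1 \<in> N" "g1 \<noteq> 0" "low_deg deg2 g1 = 1"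
    | (none) "\<And>f. f \<in> M \<Longrightarrow> f \<noteq> 0 \<Longrightarrow> low_deg deg2 f \<noteq> 1"
        "\<And>g. g \<in> N \<Longrightarrow> g \<noteq> 0 \<Longrightarrow> low_deg deg2 g \<noteq> 1"
    by blast
  then show False
  proof cases
    case M1
    then show False using even_form_splitting_with_low_deg2_1[OF S E G] by blast
  next
    case N1
    then show False using even_form_splitting_with_low_deg2_1[OF form_splitting_swap[OF S] E G] by blast
  next
    case none
    have G0: "mon d 0 \<in> G" using G(1)[of 0] by simp
    obtain f0 f where f0: "f0 \<in> M" "f0 \<noteq> 0" "low_deg deg2 f0 = 0" and f: "f \<in> M" "f \<noteq> 0" "low_deg deg2 f \<noteq> 0"
      by (rule form_splitting_orders_pure_powers[OF S G0 G(2)])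
    obtain g0 g where g0: "g0 \<in> N" "g0 \<noteq> 0" "low_deg deg2 g0 = 0" and g: "g \<in> N" "g \<noteq> 0" "low_deg deg2 g \<noteq> 0"
      by (rule form_splitting_orders_pure_powers[OF form_splitting_swap[OF S] G0 G(2)])
    note good = form_splittingD(6)[OF S]
    have f_even: "even (low_deg deg2 f)"
      using E[OF deg2_in_low_deg[OF good[OF f(1) g0(1)] f(2) g0(2)]] f(3) g0(3) none(1)[OF f(1,2)] by auto
    moreover have g_even: "even (low_deg deg2 g)"
      using E[OF deg2_in_low_deg[OF good[OF f0(1) g(1)] f0(2) g(2)]] g(3) f0(3) none(2)[OF g(1,2)] by auto
    ultimately have f2: "2 \<le> low_deg deg2 f" and g2: "2 \<le> low_deg deg2 g" using f(3) g(3) by presburger+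
    have M_N: "\<forall>u\<in>M. \<forall>v\<in>N. part (\<lambda>m. deg2 m = 1) (u * v) = 0"
      using part_deg2_1_mult_eq_0_without_low_deg2_1[OF good E none f(1,2) f_even f2 g(1,2) g_even g2] by blast
    have "mon (d - 1) 1 \<in> sum_prods M N" using G(1)[of 1] form_splittingD(7)[OF S] by simp
    then have "part (\<lambda>m. deg2 m = 1) (mon (d - 1) 1 :: ('v, 'a) mpoly) = 0"
      by (rule part_sum_prods_eq_0[OF M_N])
    then show False by (simp add: part_deg2_mon mon_neq_0)
  qed
qed

definition c'_relation :: "('v, 'a::comm_ring_1) mpoly \<Rightarrow> bool" where
  "c'_relation F \<longleftrightarrow> part (\<lambda>m. deg2 m = 0) F * mon 0 3 = part (\<lambda>m. deg2 m = 3) F * mon 3 0"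

lemma const12_closed_c'_relation: "const12_closed c'_relation"
  unfolding const12_closed_def c'_relation_def
  by (simp add: part_add part_deg2_const12_mult algebra_simps)

lemma c'_part_deg2_2_eq_0:
  fixes M N :: "('v, 'a::idom) mpoly set"
  assumes M: "form_module 1 M" and good: "\<And>f g. f \<in> M \<Longrightarrow> g \<in> N \<Longrightarrow> c'_relation (f * g)"
    and f1: "f1 \<in> M" "f1 \<noteq> 0" "low_deg deg2 f1 = 1" and g: "g \<in> N"
  shows "part (\<lambda>m. deg2 m = 2) g = 0"
proof -
  have f1_deg2: "deg2 m = 1" if "m \<in> keys f1" for m
    using homog_deg2_le[OF form_module_homog[OF M f1(1)] that] low_deg_le[OF that, of deg2] f1(3) by simp
  have "part (\<lambda>m. deg2 m = 0) (f1 * g) = 0"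
  proof (rule part_eq_0)
    fix m assume "m \<in> keys (f1 * g)"
    then have "1 + 0 \<le> deg2 m" by (rule weight_in_keys_mult_ge[OF additive_deg2]) (auto dest: f1_deg2)
    then show "deg2 m \<noteq> 0" by simp
  qed
  then have "part (\<lambda>m. deg2 m = 3) (f1 * g) * mon 3 0 = 0"
    using good[OF f1(1) g] unfolding c'_relation_def by simp
  then have "part (\<lambda>m. deg2 m = 3) (f1 * g) = 0" using mpoly_mult_neq_0[OF _ mon_neq_0] by blast
  moreover have "part (\<lambda>m. deg2 m = 1 + 2) (f1 * g) = f1 * part (\<lambda>m. deg2 m = 2) g"
    by (rule part_mult_homogeneous[OF additive_deg2]) (rule f1_deg2)
  ultimately have "f1 * part (\<lambda>m. deg2 m = 2) g = 0" by (simp only: one_plus_numeral semiring_norm)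
  then show ?thesis using mpoly_mult_neq_0[OF f1(2)] by blast
qed

text \<open>In a splitting of degrees \<open>1 + 2\<close> all nonzero quadratic initial forms have \<open>x2\<close>-order 1:
  the relation defining \<open>c'\<close> kills their \<open>x2\<^sup>2\<close>-part (against \<open>f\<^sub>1\<close>) and their \<open>x2\<close>-free part
  (against \<open>f\<^sub>0\<close>).\<close>

lemma c'_low_deg2_eq_1:
  fixes M N :: "('v, 'a::idom) mpoly set"
  assumes M: "form_module 1 M" and N: "form_module 2 N"
    and good: "\<And>f g. f \<in> M \<Longrightarrow> g \<in> N \<Longrightarrow> c'_relation (f * g)"
    and f0: "f0 \<in> M" "f0 \<noteq> 0" "low_deg deg2 f0 = 0" and f1: "f1 \<in> M" "f1 \<noteq> 0" "low_deg deg2 f1 = 1"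
    and g: "g \<in> N" "g \<noteq> 0"
  shows "low_deg deg2 g = 1"
proof -
  have g2: "part (\<lambda>m. deg2 m = 2) g = 0" by (rule c'_part_deg2_2_eq_0[OF M good f1 g(1)])
  have g_deg2: "deg2 m \<le> 1" if "m \<in> keys g" for m
    using homog_deg2_le[OF form_module_homog[OF N g(1)] that] part_neq_0[OF that, of "\<lambda>m. deg2 m = 2"] g2
    by fastforce
  have "part (\<lambda>m. deg2 m = 3) (f0 * g) = 0"
  proof (rule part_eq_0)
    fix m assume "m \<in> keys (f0 * g)"
    then have "deg2 m \<le> 1 + 1"
      by (rule weight_in_keys_mult_le[OF additive_deg2])
        (auto dest: g_deg2 homog_deg2_le[OF form_module_homog[OF M f0(1)]])
    then show "deg2 m \<noteq> 3" by simp
  qed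
  then have "part (\<lambda>m. deg2 m = 0) (f0 * g) * mon 0 3 = 0"
    using good[OF f0(1) g(1)] unfolding c'_relation_def by simp
  then have "part (\<lambda>m. deg2 m = 0 + 0) (f0 * g) = 0" using mpoly_mult_neq_0[OF _ mon_neq_0] by fastforce
  moreover have "part (\<lambda>m. deg2 m = 0 + 0) (f0 * g) = part (\<lambda>m. deg2 m = 0) f0 * part (\<lambda>m. deg2 m = 0) g"
    by (rule part_mult_lowest[OF additive_deg2]) auto
  moreover have "part (\<lambda>m. deg2 m = 0) f0 \<noteq> 0" using part_low_deg_neq_0[OF f0(2), of deg2] f0(3) by simp
  ultimately have g0: "part (\<lambda>m. deg2 m = 0) g = 0" using mpoly_mult_neq_0 by fastforce
  have "low_deg deg2 g \<le> 2" using homog_low_deg_le(1)[OF form_module_homog[OF N g(1)] g(2)] .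
  moreover have "part (\<lambda>m. deg2 m = low_deg deg2 g) g \<noteq> 0" by (rule part_low_deg_neq_0[OF g(2)])
  ultimately show ?thesis using g0 g2 by (cases "low_deg deg2 g") (auto simp: numeral_2_eq_2 le_Suc_eq)
qed

lemma c'_form_splitting_1_2:
  fixes G :: "('v, 'a::idom) mpoly set"
  assumes S: "form_splitting 3 c'_relation G 1 2 M N" and G: "mon 2 1 \<in> G" "mon 3 0 + mon 0 3 \<in> G"
  shows False
proof -
  note S' = form_splittingD[OF S] and T = form_splittingD[OF form_splitting_swap[OF S]]
  have e: "mon 2 1 \<in> sum_prods M N" "mon 3 0 + mon 0 3 \<in> sum_prods M N" using G S'(7) by blast+
  have r: "part (\<lambda>m. deg2 m = 0) (mon 3 0 + mon 0 3 :: ('v, 'a) mpoly) \<noteq> 0"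
    by (simp add: part_deg2_mon part_add mon_neq_0)
  obtain f0 where f0: "f0 \<in> M" "f0 \<noteq> 0" "low_deg deg2 f0 = 0" by (rule sum_prods_low_deg2_0[OF e(2) r])
  obtain g0 where g0: "g0 \<in> N" "g0 \<noteq> 0" "low_deg deg2 g0 = 0"
    by (rule sum_prods_low_deg2_0[OF sum_prods_commute[OF e(2)] r])
  obtain f where f: "f \<in> M" "f \<noteq> 0" "low_deg deg2 f \<noteq> 0"
    using low_deg2_not_constant_c'[OF S'(1,2,3,4) e f0(1,2)] f0(3) by auto
  have "low_deg deg2 f \<le> 1" using homog_low_deg_le(1)[OF form_module_homog[OF S'(1) f(1)] f(2)] .
  then have f1: "low_deg deg2 f = 1" using f(3) by simp
  obtain g where g: "g \<in> N" "g \<noteq> 0" "low_deg deg2 g \<noteq> low_deg deg2 g0"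
    using low_deg2_not_constant_c'[OF T(1,2,3,4) sum_prods_commute[OF e(1)] sum_prods_commute[OF e(2)] g0(1,2)]
    by blast
  show False using c'_low_deg2_eq_1[OF S'(1,2) S'(6) f0 f(1,2) f1] g g0 by force
qed

lemma no_form_splitting_c':
  fixes G :: "('v, 'a::idom) mpoly set"
  assumes G: "mon 2 1 \<in> G" "mon 3 0 + mon 0 3 \<in> G"
  shows "\<not> form_splitting 3 c'_relation G p q M N"
proof
  assume S: "form_splitting 3 c'_relation G p q M N"
  then have "p = 1 \<and> q = 2 \<or> p = 2 \<and> q = 1" unfolding form_splitting_def by auto
  then show False
    using c'_form_splitting_1_2[OF _ G] S form_splitting_swap[OF S] by blast
qed

section \<open>The four families of atoms\<close>

lemma ideal_atom_monomial_family:
  assumes d: "1 \<le> d" and E: "0 \<in> E" "d \<in> E" "\<And>t. t \<in> E \<Longrightarrow> t \<le> d"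
    and no_splitting: "\<And>p q M N. \<not> form_splitting d (deg2_in E) ({mon (d - t) t | t. t \<in> E} :: ('v, 'a::idom) mpoly set) p q M N"
  shows "ideal_atom (ideal_gen {mon (d - t) t | t. t \<in> E} :: ('v, 'a) mpoly set)"
proof (rule ideal_atom_if_no_form_splitting[OF d _ const12_closed_deg2_in _ _ _ _ no_splitting])
  show "homog d \<gamma> \<and> deg2_in E \<gamma>" if \<gamma>: "\<gamma> \<in> {mon (d - t) t | t. t \<in> E}" for \<gamma> :: "('v, 'a) mpoly"
  proof -
    obtain t where t: "t \<in> E" "\<gamma> = mon (d - t) t" using \<gamma> by blast
    have "homog d (mon (d - t) t :: ('v, 'a) mpoly)" using E(3)[OF t(1)] by (simp add: homog_mon)
    moreover have "deg2_in E (mon (d - t) t :: ('v, 'a) mpoly)" by (rule deg2_in_mon[OF t(1)])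
    ultimately show ?thesis using t(2) by simp
  qed
  show g0: "mon d 0 \<in> {mon (d - t) t | t. t \<in> E}" by (intro CollectI exI[of _ 0]) (simp add: E(1))
  show "part (\<lambda>m. deg2 m = 0) (mon d 0) = mon d 0" by (simp add: part_deg2_mon)
  have g1: "mon 0 d \<in> {mon (d - t) t | t. t \<in> E}" by (intro CollectI exI[of _ d]) (simp add: E(2))
  show "Var x1 ^ d \<in> ideal_gen {mon (d - t) t | t. t \<in> E}" "Var x2 ^ d \<in> ideal_gen {mon (d - t) t | t. t \<in> E}"
    unfolding Var1_power Var2_power by (rule subsetD[OF ideal_gen_subset g0], rule subsetD[OF ideal_gen_subset g1])
qed

lemma mon_mem_family: "t \<in> E \<Longrightarrow> a = d - t \<Longrightarrow> mon a t \<in> {mon (d - t) t | t. t \<in> E}"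
  by blast

lemma ideal_atom_b_ideal:
  assumes "1 \<le> i"
  shows "ideal_atom (b_ideal i x1 x2 :: ('v, 'a::idom) mpoly set)"
proof -
  have "(b_ideal i x1 x2 :: ('v, 'a) mpoly set) = ideal_gen {mon (i - t) t | t. t \<in> {0, i}}"
    unfolding b_ideal_def Setcompr_eq_image by (simp add: Var1_power Var2_power)
  also have "ideal_atom \<dots>"
  proof (rule ideal_atom_monomial_family)
    show "\<not> form_splitting i (deg2_in {0, i}) ({mon (i - t) t | t. t \<in> {0, i}} :: ('v, 'a) mpoly set) p q M N"
      for p q M N by (rule no_form_splitting_pure_powers; rule mon_mem_family) auto
  qed (use assms in auto)
  finally show ?thesis .
qed

lemma ideal_atom_c_odd_ideal: "ideal_atom (c_odd_ideal i x1 x2 :: ('v, 'a::idom) mpoly set)"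
proof -
  define E where "E = {0, 1} \<union> {t. odd t \<and> t \<le> 2 * i + 1}"
  have "(c_odd_ideal i x1 x2 :: ('v, 'a) mpoly set) = ideal_gen {mon (2 * i + 1 - t) t | t. t \<in> E}"
    unfolding c_odd_ideal_def E_def by (simp add: Var_power_mult_eq_mon)
  also have "ideal_atom \<dots>"
  proof (rule ideal_atom_monomial_family)
    show "\<not> form_splitting (2 * i + 1) (deg2_in E) ({mon (2 * i + 1 - t) t | t. t \<in> E} :: ('v, 'a) mpoly set) p q M N"
      for p q M N by (rule no_form_splitting_odd; (rule mon_mem_family)?) (auto simp: E_def)
  qed (auto simp: E_def)
  finally show ?thesis .
qed

lemma ideal_atom_c_even_ideal:
  assumes "3 \<le> i"
  shows "ideal_atom (c_even_ideal i x1 x2 :: ('v, 'a::idom) mpoly set)"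
proof -
  define E where "E = {0, 1} \<union> {t. even t \<and> t \<le> 2 * i}"
  have "(c_even_ideal i x1 x2 :: ('v, 'a) mpoly set) = ideal_gen {mon (2 * i - t) t | t. t \<in> E}"
    unfolding c_even_ideal_def E_def by (simp add: Var_power_mult_eq_mon)
  also have "ideal_atom \<dots>"
  proof (rule ideal_atom_monomial_family)
    show "\<not> form_splitting (2 * i) (deg2_in E) ({mon (2 * i - t) t | t. t \<in> E} :: ('v, 'a) mpoly set) p q M N"
      for p q M N by (rule no_form_splitting_even; (rule mon_mem_family)?) (use assms in \<open>auto simp: E_def\<close>)
  qed (use assms in \<open>auto simp: E_def\<close>)
  finally show ?thesis .
qed

lemma ideal_atom_c'_ideal: "ideal_atom (c'_ideal x1 x2 :: ('v, 'a::idom) mpoly set)"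
proof -
  define G :: "('v, 'a) mpoly set" where "G = {mon 3 0 + mon 0 3, mon 2 1, mon 1 2}"
  have "(Var x1 ^ 3 + Var x2 ^ 3 :: ('v, 'a) mpoly) = mon 3 0 + mon 0 3"
    "(Var x1 ^ 2 * Var x2 :: ('v, 'a) mpoly) = mon 2 1" "(Var x1 * Var x2 ^ 2 :: ('v, 'a) mpoly) = mon 1 2"
    using Var_power_mult_eq_mon[of 2 1] Var_power_mult_eq_mon[of 1 2] by (simp_all only: Var1_power Var2_power power_one_right)
  then have "(c'_ideal x1 x2 :: ('v, 'a) mpoly set) = ideal_gen G"
    unfolding c'_ideal_def G_def by (simp only:)
  also have "ideal_atom (ideal_gen G)"
  proof (rule ideal_atom_if_no_form_splitting[OF _ _ const12_closed_c'_relation])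
    have "homog 3 (mon 3 0)" "homog 3 (mon 0 3)" "homog 3 (mon 2 1)" "homog 3 (mon 1 2)"
      by (simp_all add: homog_mon)
    then have "homog 3 (mon 3 0 + mon 0 3)" "homog 3 (mon 2 1)" "homog 3 (mon 1 2)"
      by (auto intro: homog_add)
    moreover have "c'_relation (mon 3 0 + mon 0 3)" "c'_relation (mon 2 1)" "c'_relation (mon 1 2)"
      by (simp_all add: c'_relation_def part_add part_deg2_mon mon_mult)
    ultimately show "homog 3 \<gamma> \<and> c'_relation \<gamma>" if "\<gamma> \<in> G" for \<gamma>
      using that unfolding G_def by blast
    show "mon 3 0 + mon 0 3 \<in> G" "part (\<lambda>m. deg2 m = 0) (mon 3 0 + mon 0 3) = mon 3 0"
      by (simp_all add: G_def part_add part_deg2_mon)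
    have gens: "mon 3 0 + mon 0 3 \<in> ideal_gen G" "mon 2 1 \<in> ideal_gen G" "mon 1 2 \<in> ideal_gen G"
      by (rule subsetD[OF ideal_gen_subset], simp add: G_def)+
    have "mon 4 0 = mon 1 0 * (mon 3 0 + mon 0 3) - mon 0 1 * (mon 1 2 :: ('v, 'a) mpoly)"
      "mon 0 4 = mon 0 1 * (mon 3 0 + mon 0 3) - mon 1 0 * (mon 2 1 :: ('v, 'a) mpoly)"
      by (simp_all add: distrib_left mon_mult eval_nat_numeral)
    then show "Var x1 ^ 4 \<in> ideal_gen G" "Var x2 ^ 4 \<in> ideal_gen G"
      unfolding Var1_power Var2_power
      using ideal_diff[OF is_ideal_ideal_gen ideal_mult_left[OF is_ideal_ideal_gen gens(1)]
          ideal_mult_left[OF is_ideal_ideal_gen gens(3)]]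
        ideal_diff[OF is_ideal_ideal_gen ideal_mult_left[OF is_ideal_ideal_gen gens(1)]
          ideal_mult_left[OF is_ideal_ideal_gen gens(2)]]
      by simp_all
    show "\<not> form_splitting 3 c'_relation G p q M N" for p q M N
      by (rule no_form_splitting_c') (simp_all add: G_def)
  qed simp
  finally show ?thesis .
qed

end

theorem proposition5p10:
  fixes x1 x2 :: "'v::finite"
  assumes "CARD('v) \<ge> 2"
    and "x1 \<noteq> x2"
    and "ideal_BF TYPE(('v, 'a::idom) mpoly)"
  shows "(\<forall>i\<ge>1. ideal_atom (b_ideal i x1 x2 :: ('v,'a) mpoly set))
       \<and> (\<forall>i\<ge>1. ideal_atom (c_odd_ideal i x1 x2 :: ('v,'a) mpoly set))
       \<and> (\<forall>i\<ge>3. ideal_atom (c_even_ideal i x1 x2 :: ('v,'a) mpoly set))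
       \<and> ideal_atom (c'_ideal x1 x2 :: ('v,'a) mpoly set)"
proof -
  interpret two_vars x1 x2 by unfold_locales (rule assms(2))
  show ?thesis
    using ideal_atom_b_ideal ideal_atom_c_odd_ideal ideal_atom_c_even_ideal ideal_atom_c'_ideal by blast
qed

end
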